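(* In the setting of the context, let $p_j:=\|v_j\|^2/\operatorname{tr}(\Sigma)$ for $j\in\mathbb N$ (leverage-score distribution), assume $\mathcal W\subseteq\mathcal S$, and assume that $R'<\infty$ for this $p$. Then there is a constant $c>0$ depending only on the bounds $A,B,C,D$ (e.g. $c=\frac83\big(\frac{BD}{AC}\big)^2$) such that for every $f\in\mathcal H$, $n\in\mathbb N$, $\delta\in(0,1)$: if $m\ge c\,n\log(2n/\delta)$, then with probability at least $1-\delta$ the matrix $\widehat\Sigma_\Omega$ is invertible, the weighted least-squares problem $\operatorname{argmin}_{x\in\mathbb C^n}\sum_{t=1}^mp_{i_t}^{-1}|\langle W\iota_nx,s_{i_t}\rangle-\langle f,s_{i_t}\rangle|^2$ has a unique solution $\tilde x$, and $\tilde f:=W\iota_n\tilde x$ satisfies $\|f-\tilde f\|\le\|P_{\mathcal W_n^\perp}f\|(1+K_{n,\Omega}^2)^{1/2}$ with $K_{n,\Omega}:=\|W\iota_n\widehat\Sigma_\Omega^{-1}\widehat\Gamma_\Omega\|$.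
   Context: Let $\mathcal H$ be a separable complex Hilbert space, $\ell^2=\ell^2(\mathbb N)$ with canonical basis $(e_j)$; $a\otimes b$ denotes $x\mapsto\langle x,b\rangle a$; $\iota_n:\mathbb C^n\to\ell^2$, $\iota_n(x_1,\dots,x_n)=(x_1,\dots,x_n,0,\dots)$. $(s_k)_{k\in\mathbb N}$ is a frame for its closed span $\mathcal S$ with bounds $0<A\le B$ ($A\|h\|^2\le\sum_k|\langle h,s_k\rangle|^2\le B\|h\|^2$, $h\in\mathcal S$); $(w_k)_{k\in\mathbb N}$ is a Riesz basis for its closed span $\mathcal W$ with bounds $0<C\le D$ ($C\|x\|^2\le\|\sum_kx_kw_k\|^2\le D\|x\|^2$, $x\in\ell^2$). Synthesis operators $Sx=\sum_kx_ks_k$, $Wx=\sum_kx_kw_k$; $U:=S^*W$. $\mathcal W_n:=\operatorname{span}\{w_1,\dots,w_n\}$, $P_{\mathcal W_n^\perp}$ orthogonal projection onto $\mathcal W_n^\perp$. $\Sigma:=\iota_n^*U^*U\iota_n$, $v_j:=\iota_n^*U^*e_j$, $u_j:=P_{\mathcal W_n^\perp}s_j$, $R':=\sup_{j:p_j>0}\|u_j\|^2/p_j$. $i_1,\dots,i_m$ i.i.d. with law $p$, $Q_\Omega:=\frac1m\sum_t\frac{e_{i_t}\otimes e_{i_t}}{p_{i_t}}$, $\widehat\Sigma_\Omega:=\iota_n^*U^*Q_\Omega U\iota_n$, $\widehat\Gamma_\Omega:=\iota_n^*U^*Q_\Omega S^*P_{\mathcal W_n^\perp}$. *)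

theory Defs
  imports "HOL-Probability.Probability" "Jordan_Normal_Form.Matrix"
begin

section \<open>The Hilbert space H, modelled as l2(N) of complex sequences\<close>

type_synonym seq = "nat \<Rightarrow> complex"

definition l2 :: "seq set" where
  "l2 = {x. summable (\<lambda>j. (cmod (x j))\<^sup>2)}"

definition l2_inner :: "seq \<Rightarrow> seq \<Rightarrow> complex" where
  "l2_inner x y = (\<Sum>j. x j * cnj (y j))"

definition l2_norm :: "seq \<Rightarrow> real" where
  "l2_norm x = sqrt (\<Sum>j. (cmod (x j))\<^sup>2)"

definition l2_sums :: "(nat \<Rightarrow> seq) \<Rightarrow> seq \<Rightarrow> bool" where
  "l2_sums g h \<longleftrightarrow> (\<lambda>N. l2_norm (\<lambda>j. h j - (\<Sum>k<N. g k j))) \<longlonglongrightarrow> 0"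

definition lin_span :: "(nat \<Rightarrow> seq) \<Rightarrow> nat set \<Rightarrow> seq set" where
  "lin_span s I = {(\<lambda>j. \<Sum>k\<in>F. c k * s k j) | F c. finite F \<and> F \<subseteq> I}"

definition l2_closure :: "seq set \<Rightarrow> seq set" where
  "l2_closure V = {h \<in> l2. \<forall>e>0. \<exists>v\<in>V. l2_norm (\<lambda>j. h j - v j) < e}"

definition closed_span :: "(nat \<Rightarrow> seq) \<Rightarrow> seq set" where
  "closed_span s = l2_closure (lin_span s UNIV)"

definition orth_compl :: "seq set \<Rightarrow> seq set" where
  "orth_compl V = {u \<in> l2. \<forall>v\<in>V. l2_inner u v = 0}"

definition orth_proj :: "seq set \<Rightarrow> seq \<Rightarrow> seq" where
  "orth_proj V h = (THE p. p \<in> V \<and> (\<forall>v\<in>V. l2_inner (\<lambda>j. h j - p j) v = 0))"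

definition l2_opnorm :: "(seq \<Rightarrow> seq) \<Rightarrow> real" where
  "l2_opnorm T = Sup {l2_norm (T h) | h. h \<in> l2 \<and> l2_norm h \<le> 1}"

definition is_frame :: "(nat \<Rightarrow> seq) \<Rightarrow> real \<Rightarrow> real \<Rightarrow> bool" where
  "is_frame s A B \<longleftrightarrow> 0 < A \<and> A \<le> B \<and> (\<forall>k. s k \<in> l2) \<and>
     (\<forall>h \<in> closed_span s. summable (\<lambda>k. (cmod (l2_inner h (s k)))\<^sup>2) \<and>
        A * (l2_norm h)\<^sup>2 \<le> (\<Sum>k. (cmod (l2_inner h (s k)))\<^sup>2) \<and>
        (\<Sum>k. (cmod (l2_inner h (s k)))\<^sup>2) \<le> B * (l2_norm h)\<^sup>2)"

definition is_riesz_basis :: "(nat \<Rightarrow> seq) \<Rightarrow> real \<Rightarrow> real \<Rightarrow> bool" where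
  "is_riesz_basis w C D \<longleftrightarrow> 0 < C \<and> C \<le> D \<and> (\<forall>k. w k \<in> l2) \<and>
     (\<forall>x \<in> l2. \<exists>h \<in> l2. l2_sums (\<lambda>k j. x k * w k j) h \<and>
        C * (l2_norm x)\<^sup>2 \<le> (l2_norm h)\<^sup>2 \<and> (l2_norm h)\<^sup>2 \<le> D * (l2_norm x)\<^sup>2)"

definition analysis_op :: "(nat \<Rightarrow> seq) \<Rightarrow> seq \<Rightarrow> seq" where
  "analysis_op s h = (\<lambda>j. l2_inner h (s j))"

definition W_iota :: "(nat \<Rightarrow> seq) \<Rightarrow> nat \<Rightarrow> complex vec \<Rightarrow> seq" where
  "W_iota w n x = (\<lambda>j. \<Sum>k<n. x $ k * w k j)"

definition U_iota :: "(nat \<Rightarrow> seq) \<Rightarrow> (nat \<Rightarrow> seq) \<Rightarrow> nat \<Rightarrow> complex vec \<Rightarrow> seq" where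
  "U_iota s w n x = analysis_op s (W_iota w n x)"

text \<open>iota_n^* U^* : l2 to C^n, using (U^* y)_k = <y, U e_k> = sum_j y_j <s_j, w_k>.\<close>
definition iota_U_adj :: "(nat \<Rightarrow> seq) \<Rightarrow> (nat \<Rightarrow> seq) \<Rightarrow> nat \<Rightarrow> seq \<Rightarrow> complex vec" where
  "iota_U_adj s w n y = vec n (\<lambda>k. \<Sum>j. y j * l2_inner (s j) (w k))"

definition e_seq :: "nat \<Rightarrow> seq" where
  "e_seq i = (\<lambda>j. if j = i then 1 else 0)"

definition cvec_norm :: "complex vec \<Rightarrow> real" where
  "cvec_norm x = sqrt (\<Sum>k<dim_vec x. (cmod (x $ k))\<^sup>2)"

definition mat_trace :: "complex mat \<Rightarrow> complex" where
  "mat_trace M = (\<Sum>i<dim_row M. M $$ (i, i))"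

definition mat_inv :: "complex mat \<Rightarrow> complex mat" where
  "mat_inv M = (SOME N. inverts_mat M N \<and> inverts_mat N M)"

definition Sigma_mat :: "(nat \<Rightarrow> seq) \<Rightarrow> (nat \<Rightarrow> seq) \<Rightarrow> nat \<Rightarrow> complex mat" where
  "Sigma_mat s w n = mat n n (\<lambda>(k, l). iota_U_adj s w n (U_iota s w n (unit_vec n l)) $ k)"

definition v_vec :: "(nat \<Rightarrow> seq) \<Rightarrow> (nat \<Rightarrow> seq) \<Rightarrow> nat \<Rightarrow> nat \<Rightarrow> complex vec" where
  "v_vec s w n j = iota_U_adj s w n (e_seq j)"

definition leverage :: "(nat \<Rightarrow> seq) \<Rightarrow> (nat \<Rightarrow> seq) \<Rightarrow> nat \<Rightarrow> nat \<Rightarrow> real" where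
  "leverage s w n j = (cvec_norm (v_vec s w n j))\<^sup>2 / Re (mat_trace (Sigma_mat s w n))"

text \<open>W_n = span{w_1,...,w_n} (0-based: w 0, ..., w (n-1)) and P onto its orthogonal complement.\<close>
definition W_sub :: "(nat \<Rightarrow> seq) \<Rightarrow> nat \<Rightarrow> seq set" where
  "W_sub w n = lin_span w {..<n}"

definition P_perp :: "(nat \<Rightarrow> seq) \<Rightarrow> nat \<Rightarrow> seq \<Rightarrow> seq" where
  "P_perp w n = orth_proj (orth_compl (W_sub w n))"

definition R_prime :: "(nat \<Rightarrow> seq) \<Rightarrow> (nat \<Rightarrow> seq) \<Rightarrow> nat \<Rightarrow> (nat \<Rightarrow> real) \<Rightarrow> ereal" where
  "R_prime s w n p = (SUP j \<in> {j. p j > 0}. ereal ((l2_norm (P_perp w n (s j)))\<^sup>2 / p j))"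

definition Q_op :: "(nat \<Rightarrow> real) \<Rightarrow> nat \<Rightarrow> (nat \<Rightarrow> nat) \<Rightarrow> seq \<Rightarrow> seq" where
  "Q_op p m \<omega> y = (\<lambda>j. (1 / of_nat m) * (\<Sum>t<m. if \<omega> t = j then y j / complex_of_real (p j) else 0))"

definition Sigma_hat :: "(nat \<Rightarrow> seq) \<Rightarrow> (nat \<Rightarrow> seq) \<Rightarrow> nat \<Rightarrow> (nat \<Rightarrow> real) \<Rightarrow> nat \<Rightarrow> (nat \<Rightarrow> nat) \<Rightarrow> complex mat" where
  "Sigma_hat s w n p m \<omega> =
     mat n n (\<lambda>(k, l). iota_U_adj s w n (Q_op p m \<omega> (U_iota s w n (unit_vec n l))) $ k)"

definition Gamma_hat :: "(nat \<Rightarrow> seq) \<Rightarrow> (nat \<Rightarrow> seq) \<Rightarrow> nat \<Rightarrow> (nat \<Rightarrow> real) \<Rightarrow> nat \<Rightarrow> (nat \<Rightarrow> nat) \<Rightarrow> seq \<Rightarrow> complex vec" where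
  "Gamma_hat s w n p m \<omega> h = iota_U_adj s w n (Q_op p m \<omega> (analysis_op s (P_perp w n h)))"

definition K_const :: "(nat \<Rightarrow> seq) \<Rightarrow> (nat \<Rightarrow> seq) \<Rightarrow> nat \<Rightarrow> (nat \<Rightarrow> real) \<Rightarrow> nat \<Rightarrow> (nat \<Rightarrow> nat) \<Rightarrow> real" where
  "K_const s w n p m \<omega> =
     l2_opnorm (\<lambda>h. W_iota w n (mat_inv (Sigma_hat s w n p m \<omega>) *\<^sub>v Gamma_hat s w n p m \<omega> h))"

definition LS_obj :: "(nat \<Rightarrow> seq) \<Rightarrow> (nat \<Rightarrow> seq) \<Rightarrow> nat \<Rightarrow> (nat \<Rightarrow> real) \<Rightarrow> nat \<Rightarrow> (nat \<Rightarrow> nat) \<Rightarrow> seq \<Rightarrow> complex vec \<Rightarrow> real" where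
  "LS_obj s w n p m \<omega> f x =
     (\<Sum>t<m. (cmod (l2_inner (W_iota w n x) (s (\<omega> t)) - l2_inner f (s (\<omega> t))))\<^sup>2 / p (\<omega> t))"

definition is_LS_minimizer :: "(nat \<Rightarrow> seq) \<Rightarrow> (nat \<Rightarrow> seq) \<Rightarrow> nat \<Rightarrow> (nat \<Rightarrow> real) \<Rightarrow> nat \<Rightarrow> (nat \<Rightarrow> nat) \<Rightarrow> seq \<Rightarrow> complex vec \<Rightarrow> bool" where
  "is_LS_minimizer s w n p m \<omega> f x \<longleftrightarrow> x \<in> carrier_vec n \<and>
     (\<forall>y \<in> carrier_vec n. LS_obj s w n p m \<omega> f x \<le> LS_obj s w n p m \<omega> f y)"

text \<open>Law of (i_1,...,i_m): i.i.d. with law p (indices 0..m-1).\<close>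
definition sample_pmf :: "(nat \<Rightarrow> real) \<Rightarrow> nat \<Rightarrow> (nat \<Rightarrow> nat) pmf" where
  "sample_pmf p m = Pi_pmf {..<m} 0 (\<lambda>_. embed_pmf p)"

end

theory Submission
  imports Defs "Jordan_Normal_Form.Determinant"
begin

(*
  Write a j k = <w_k, s_j> for the matrix of U = S^* W. As W lies in S, the frame and Riesz
  bounds give A C |z|^2 <= sum_j |(a z)_j|^2 for z in C^n and squared column norms between A C
  and B D; hence tr Sigma <= n B D, and p_j is the squared norm of row j divided by tr Sigma.

  Let d_t be the dimension of the common kernel of the first t sampled rows, and Z an orthonormal
  basis of that kernel. Bessel's inequality for each row, summed against the lower bound, shows
  that the rows not annihilating Z carry probability at least d_t A C / tr Sigma, and each of them
  lowers the dimension. So E d_(t+1) <= (1 - A C / tr Sigma) E d_t and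
  P(d_m > 0) <= n (1 - A C / tr Sigma)^m <= delta as soon as m >= (B D / A C) n log (2 n / delta).

  If d_m = 0, the sampled rows determine every z, so Sigma_hat is positive definite. Writing
  f - P f = W iota_n y, the normal equations give the unique least-squares solution
  y + Sigma_hat^-1 Gamma_hat f, and its error P f - W iota_n Sigma_hat^-1 Gamma_hat f is an
  orthogonal sum whose second term has norm at most K ||P f||.
*)

section \<open>The sequence space l2\<close>

lemma cmod_mult_cnj_le: "cmod (a * cnj b) \<le> ((cmod a)\<^sup>2 + (cmod b)\<^sup>2) / 2"
  using sum_squares_bound[of "cmod a" "cmod b"] by (simp add: norm_mult)

lemma l2_inner_summable_norm:
  assumes "x \<in> l2" "y \<in> l2"
  shows "summable (\<lambda>j. cmod (x j * cnj (y j)))"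
proof (rule summable_comparison_test)
  show "\<exists>N. \<forall>j\<ge>N. norm (cmod (x j * cnj (y j))) \<le> ((cmod (x j))\<^sup>2 + (cmod (y j))\<^sup>2) / 2"
    using cmod_mult_cnj_le by simp
  show "summable (\<lambda>j. ((cmod (x j))\<^sup>2 + (cmod (y j))\<^sup>2) / 2)"
    using assms by (intro summable_divide summable_add) (auto simp: l2_def)
qed

lemma l2_inner_summable: "x \<in> l2 \<Longrightarrow> y \<in> l2 \<Longrightarrow> summable (\<lambda>j. x j * cnj (y j))"
  by (rule summable_norm_cancel[OF l2_inner_summable_norm])

lemma l2_zero [simp]: "(\<lambda>j. 0) \<in> l2"
  by (simp add: l2_def)

lemma l2_add:
  assumes "x \<in> l2" "y \<in> l2"
  shows "(\<lambda>j. x j + y j) \<in> l2"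
  unfolding l2_def
proof (simp, rule summable_comparison_test)
  have "(cmod (x j + y j))\<^sup>2 \<le> 2 * (cmod (x j))\<^sup>2 + 2 * (cmod (y j))\<^sup>2" for j
  proof -
    have "(cmod (x j + y j))\<^sup>2 \<le> (cmod (x j) + cmod (y j))\<^sup>2"
      by (simp add: power_mono norm_triangle_ineq)
    also have "\<dots> \<le> 2 * (cmod (x j))\<^sup>2 + 2 * (cmod (y j))\<^sup>2"
      using sum_squares_bound[of "cmod (x j)" "cmod (y j)"] by (simp add: power2_sum)
    finally show ?thesis .
  qed
  then show "\<exists>N. \<forall>j\<ge>N. norm ((cmod (x j + y j))\<^sup>2) \<le> 2 * (cmod (x j))\<^sup>2 + 2 * (cmod (y j))\<^sup>2"
    by simp
  show "summable (\<lambda>j. 2 * (cmod (x j))\<^sup>2 + 2 * (cmod (y j))\<^sup>2)"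
    using assms by (intro summable_add summable_mult) (auto simp: l2_def)
qed

lemma l2_scale: "x \<in> l2 \<Longrightarrow> (\<lambda>j. c * x j) \<in> l2"
  unfolding l2_def by (simp add: norm_mult power_mult_distrib summable_mult)

lemma l2_diff:
  assumes "x \<in> l2" "y \<in> l2"
  shows "(\<lambda>j. x j - y j) \<in> l2"
  using l2_add[OF assms(1) l2_scale[OF assms(2), of "-1"]] by simp

lemma l2_lincomb:
  assumes "finite F" "\<And>k. k \<in> F \<Longrightarrow> f k \<in> l2"
  shows "(\<lambda>j. \<Sum>k\<in>F. c k * f k j) \<in> l2"
  using assms
proof (induction F rule: finite_induct)
  case (insert a F)
  then show ?case using l2_add[OF l2_scale[of "f a" "c a"]] by simp
qed simp

lemma l2_finite_support:
  assumes "\<And>j. j \<ge> N \<Longrightarrow> x j = 0"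
  shows "x \<in> l2"
  unfolding l2_def by (simp, rule summable_finite[of "{..<N}"]) (use assms in auto)

lemma l2_inner_add_left:
  assumes "x \<in> l2" "y \<in> l2" "z \<in> l2"
  shows "l2_inner (\<lambda>j. x j + y j) z = l2_inner x z + l2_inner y z"
  unfolding l2_inner_def distrib_right
  by (rule suminf_add[symmetric, OF l2_inner_summable[OF assms(1,3)]
        l2_inner_summable[OF assms(2,3)]])

lemma l2_inner_scale_left:
  assumes "x \<in> l2" "z \<in> l2"
  shows "l2_inner (\<lambda>j. c * x j) z = c * l2_inner x z"
  unfolding l2_inner_def mult.assoc by (rule suminf_mult[OF l2_inner_summable[OF assms]])

lemma l2_inner_lincomb_left:
  assumes "finite F" "\<And>k. k \<in> F \<Longrightarrow> f k \<in> l2" "z \<in> l2"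
  shows "l2_inner (\<lambda>j. \<Sum>k\<in>F. c k * f k j) z = (\<Sum>k\<in>F. c k * l2_inner (f k) z)"
proof -
  have "(\<Sum>j. \<Sum>k\<in>F. c k * (f k j * cnj (z j))) = (\<Sum>k\<in>F. \<Sum>j. c k * (f k j * cnj (z j)))"
    using assms by (intro suminf_sum summable_mult l2_inner_summable) auto
  also have "\<dots> = (\<Sum>k\<in>F. c k * l2_inner (f k) z)"
    unfolding l2_inner_def using assms by (intro sum.cong suminf_mult l2_inner_summable) auto
  finally show ?thesis
    unfolding l2_inner_def by (simp add: sum_distrib_right mult.assoc)
qed

lemma l2_inner_commute:
  assumes "x \<in> l2" "y \<in> l2"
  shows "cnj (l2_inner x y) = l2_inner y x"
  unfolding l2_inner_def
  using bounded_linear.suminf[OF bounded_linear_cnj l2_inner_summable[OF assms]]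
  by (simp add: ac_simps)

lemma l2_inner_diff_left:
  assumes "x \<in> l2" "y \<in> l2" "z \<in> l2"
  shows "l2_inner (\<lambda>j. x j - y j) z = l2_inner x z - l2_inner y z"
  using l2_inner_add_left[OF assms(1) l2_scale[OF assms(2)] assms(3), of "-1"]
    l2_inner_scale_left[OF assms(2,3), of "-1"]
  by simp

lemma l2_inner_zero_left [simp]: "l2_inner (\<lambda>j. 0) z = 0"
  by (simp add: l2_inner_def)

lemma l2_inner_lincomb_right:
  assumes "finite F" "\<And>k. k \<in> F \<Longrightarrow> f k \<in> l2" "z \<in> l2"
  shows "l2_inner z (\<lambda>j. \<Sum>k\<in>F. c k * f k j) = (\<Sum>k\<in>F. cnj (c k) * l2_inner z (f k))"
proof -
  have "l2_inner z (\<lambda>j. \<Sum>k\<in>F. c k * f k j) = cnj (\<Sum>k\<in>F. c k * l2_inner (f k) z)"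
    using l2_inner_commute[OF l2_lincomb[OF assms(1,2)] assms(3)] l2_inner_lincomb_left[OF assms]
    by simp
  then show ?thesis
    using assms by (simp add: l2_inner_commute)
qed

lemma l2_norm_square: "x \<in> l2 \<Longrightarrow> (l2_norm x)\<^sup>2 = (\<Sum>j. (cmod (x j))\<^sup>2)"
  unfolding l2_norm_def l2_def by (simp add: suminf_nonneg)

lemma l2_norm_nonneg: "x \<in> l2 \<Longrightarrow> 0 \<le> l2_norm x"
  unfolding l2_norm_def l2_def by (simp add: suminf_nonneg)

lemma mult_cnj_self: "z * cnj z = complex_of_real ((cmod z)\<^sup>2)"
  by (metis complex_norm_square of_real_power)

lemma l2_inner_self:
  assumes "x \<in> l2"
  shows "l2_inner x x = complex_of_real ((l2_norm x)\<^sup>2)"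
proof -
  have "l2_inner x x = (\<Sum>j. complex_of_real ((cmod (x j))\<^sup>2))"
    unfolding l2_inner_def by (simp only: mult_cnj_self)
  also have "\<dots> = complex_of_real (\<Sum>j. (cmod (x j))\<^sup>2)"
    using assms by (simp add: l2_def suminf_of_real)
  finally show ?thesis using l2_norm_square[OF assms] by simp
qed

lemma l2_norm_eq_0_imp:
  assumes "x \<in> l2" "l2_norm x = 0"
  shows "x j = 0"
proof -
  have sq_summable: "summable (\<lambda>j. (cmod (x j))\<^sup>2)" using assms(1) by (simp add: l2_def)
  have "(\<Sum>j. (cmod (x j))\<^sup>2) = 0" using l2_norm_square[OF assms(1)] assms(2) by simp
  then have "\<forall>j. (cmod (x j))\<^sup>2 = 0"
    using suminf_eq_zero_iff[OF sq_summable] by simp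
  then show ?thesis by simp
qed

lemma l2_norm_zero [simp]: "l2_norm (\<lambda>j. 0) = 0"
  by (simp add: l2_norm_def)

lemma l2_inner_le:
  assumes "x \<in> l2" "y \<in> l2"
  shows "cmod (l2_inner x y) \<le> ((l2_norm x)\<^sup>2 + (l2_norm y)\<^sup>2) / 2"
proof -
  have sx: "summable (\<lambda>j. (cmod (x j))\<^sup>2)" and sy: "summable (\<lambda>j. (cmod (y j))\<^sup>2)"
    using assms by (auto simp: l2_def)
  have "cmod (l2_inner x y) \<le> (\<Sum>j. cmod (x j * cnj (y j)))"
    unfolding l2_inner_def by (rule summable_norm[OF l2_inner_summable_norm[OF assms]])
  also have "\<dots> \<le> (\<Sum>j. ((cmod (x j))\<^sup>2 + (cmod (y j))\<^sup>2) / 2)"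
    using l2_inner_summable_norm[OF assms] sx sy cmod_mult_cnj_le
    by (intro suminf_le summable_divide summable_add)
  also have "\<dots> = ((\<Sum>j. (cmod (x j))\<^sup>2) + (\<Sum>j. (cmod (y j))\<^sup>2)) / 2"
    using sx sy by (simp add: suminf_divide[symmetric] suminf_add summable_add)
  finally show ?thesis using l2_norm_square assms by simp
qed

lemma l2_pythagoras:
  assumes "x \<in> l2" "y \<in> l2" "l2_inner x y = 0"
  shows "(l2_norm (\<lambda>j. x j + y j))\<^sup>2 = (l2_norm x)\<^sup>2 + (l2_norm y)\<^sup>2"
proof -
  have xy: "(\<lambda>j. x j + y j) \<in> l2" using l2_add assms by auto
  have yx: "l2_inner y x = 0" using l2_inner_commute[OF assms(1,2)] assms(3) by simp
  have "l2_inner (\<lambda>j. x j + y j) (\<lambda>j. x j + y j)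
        = cnj (l2_inner (\<lambda>j. x j + y j) x) + cnj (l2_inner (\<lambda>j. x j + y j) y)"
    using l2_inner_add_left[OF assms(1,2) xy] l2_inner_commute[OF xy] assms(1,2) by simp
  also have "\<dots> = l2_inner x x + l2_inner y y"
    using l2_inner_add_left[OF assms(1,2)] assms yx by (simp add: l2_inner_self)
  finally have "complex_of_real ((l2_norm (\<lambda>j. x j + y j))\<^sup>2) =
      complex_of_real ((l2_norm x)\<^sup>2) + complex_of_real ((l2_norm y)\<^sup>2)"
    by (simp only: l2_inner_self assms xy)
  then show ?thesis by (metis of_real_add of_real_eq_iff)
qed

lemma l2_norm_scale:
  assumes "x \<in> l2"
  shows "l2_norm (\<lambda>j. c * x j) = cmod c * l2_norm x"
proof -
  have "(\<Sum>j. (cmod (c * x j))\<^sup>2) = (cmod c)\<^sup>2 * (\<Sum>j. (cmod (x j))\<^sup>2)"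
    using assms by (simp add: l2_def norm_mult power_mult_distrib suminf_mult)
  then show ?thesis by (simp add: l2_norm_def real_sqrt_mult)
qed

lemma l2_norm_uminus: "l2_norm (\<lambda>j. - x j) = l2_norm x"
  by (simp add: l2_norm_def)

section \<open>Finite combinations of a Riesz basis\<close>

definition synthesis :: "(nat \<Rightarrow> seq) \<Rightarrow> nat \<Rightarrow> (nat \<Rightarrow> complex) \<Rightarrow> seq" where
  "synthesis w n z = (\<lambda>j. \<Sum>k<n. z k * w k j)"

lemma W_iota_eq_synthesis: "W_iota w n x = synthesis w n (\<lambda>k. x $ k)"
  by (simp add: W_iota_def synthesis_def)

lemma riesz_basis_l2: "is_riesz_basis w C D \<Longrightarrow> w k \<in> l2"
  unfolding is_riesz_basis_def by auto

lemma frame_l2: "is_frame s A B \<Longrightarrow> s k \<in> l2"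
  unfolding is_frame_def by auto

lemma synthesis_l2: "is_riesz_basis w C D \<Longrightarrow> synthesis w n z \<in> l2"
  unfolding synthesis_def by (rule l2_lincomb) (auto simp: riesz_basis_l2)

lemma synthesis_in_lin_span: "{..<n} \<subseteq> I \<Longrightarrow> synthesis w n z \<in> lin_span w I"
  unfolding synthesis_def lin_span_def by blast

lemma synthesis_in_closed_span:
  "is_riesz_basis w C D \<Longrightarrow> synthesis w n z \<in> closed_span w"
  using synthesis_l2[of w C D n z] synthesis_in_lin_span[of n UNIV w z]
  unfolding closed_span_def l2_closure_def by force

lemma l2_inner_synthesis_left:
  assumes "is_riesz_basis w C D" "v \<in> l2"
  shows "l2_inner (synthesis w n z) v = (\<Sum>k<n. z k * l2_inner (w k) v)"
  unfolding synthesis_def by (rule l2_inner_lincomb_left) (use assms riesz_basis_l2 in auto)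

lemma synthesis_unit: "synthesis w (Suc k) (\<lambda>i. if i = k then 1 else 0) = w k"
  unfolding synthesis_def by (rule ext) (simp add: if_distrib cong: if_cong)

lemma riesz_basis_synthesis_bounds:
  assumes "is_riesz_basis w C D"
  shows "C * (\<Sum>k<n. (cmod (z k))\<^sup>2) \<le> (l2_norm (synthesis w n z))\<^sup>2 \<and>
         (l2_norm (synthesis w n z))\<^sup>2 \<le> D * (\<Sum>k<n. (cmod (z k))\<^sup>2)"
proof -
  define x where "x = (\<lambda>k. if k < n then z k else 0)"
  have x: "x \<in> l2" by (rule l2_finite_support[of n]) (simp add: x_def)
  from assms x obtain h where h: "h \<in> l2" "l2_sums (\<lambda>k j. x k * w k j) h"
     "C * (l2_norm x)\<^sup>2 \<le> (l2_norm h)\<^sup>2" "(l2_norm h)\<^sup>2 \<le> D * (l2_norm x)\<^sup>2"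
    unfolding is_riesz_basis_def by blast
  have partial_sum: "(\<Sum>k<N + n. x k * w k j) = synthesis w n z j" for N j
    unfolding synthesis_def x_def by (rule sum.mono_neutral_cong_right) auto
  have "(\<lambda>N. l2_norm (\<lambda>j. h j - (\<Sum>k<N + n. x k * w k j))) \<longlonglongrightarrow> 0"
    using LIMSEQ_ignore_initial_segment[OF h(2)[unfolded l2_sums_def]] by simp
  then have "l2_norm (\<lambda>j. h j - synthesis w n z j) = 0"
    by (simp add: partial_sum LIMSEQ_const_iff)
  then have "h = synthesis w n z"
    using l2_norm_eq_0_imp[OF l2_diff[OF h(1) synthesis_l2[OF assms]]] by auto
  moreover have "(l2_norm x)\<^sup>2 = (\<Sum>k<n. (cmod (z k))\<^sup>2)"
  proof -
    have "(l2_norm x)\<^sup>2 = (\<Sum>k<n. (cmod (x k))\<^sup>2)"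
      unfolding l2_norm_square[OF x] by (rule suminf_finite) (auto simp: x_def)
    then show ?thesis by (simp add: x_def)
  qed
  ultimately show ?thesis using h(3,4) by simp
qed

section \<open>The orthogonal projection onto the complement of a finite section\<close>

lemma mult_mat_vec_index_sum:
  assumes "A \<in> carrier_mat n n" "y \<in> carrier_vec n" "k < n"
  shows "(A *\<^sub>v y) $ k = (\<Sum>l<n. A $$ (k,l) * y $ l)"
  using assms by (auto simp: scalar_prod_def atLeast0LessThan intro: sum.cong)

lemma invertible_mat_if_trivial_kernel:
  assumes A: "(A :: complex mat) \<in> carrier_mat n n"
    and ker: "\<And>v. v \<in> carrier_vec n \<Longrightarrow> A *\<^sub>v v = 0\<^sub>v n \<Longrightarrow> v = 0\<^sub>v n"
  shows "invertible_mat A"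
proof -
  have "det A \<noteq> 0" using det_0_iff_vec_prod_zero_field[OF A] ker by blast
  then have "A \<in> Units (ring_mat TYPE(complex) n ())" by (rule det_non_zero_imp_unit[OF A])
  then show ?thesis
    using A unfolding Units_def ring_mat_def invertible_mat_def inverts_mat_def by auto
qed

lemma mat_inv_right:
  assumes M: "M \<in> carrier_mat n n" and inv: "invertible_mat M"
  shows "mat_inv M \<in> carrier_mat n n" "M * mat_inv M = 1\<^sub>m n"
proof -
  have "inverts_mat M (mat_inv M) \<and> inverts_mat (mat_inv M) M"
    using inv unfolding mat_inv_def invertible_mat_def by (metis (mono_tags) someI_ex)
  then have MN: "M * mat_inv M = 1\<^sub>m n" and NM: "mat_inv M * M = 1\<^sub>m (dim_row (mat_inv M))"
    using M by (auto simp: inverts_mat_def)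
  show "M * mat_inv M = 1\<^sub>m n" by (rule MN)
  show "mat_inv M \<in> carrier_mat n n"
    using arg_cong[OF MN, of dim_col] arg_cong[OF NM, of dim_col] M by auto
qed

definition gram :: "(nat \<Rightarrow> seq) \<Rightarrow> nat \<Rightarrow> complex mat" where
  "gram w n = mat n n (\<lambda>(k, l). l2_inner (w l) (w k))"

lemma l2_inner_synthesis_self:
  assumes "is_riesz_basis w C D"
  shows "l2_inner (synthesis w n y) (synthesis w n y)
           = (\<Sum>k<n. cnj (y k) * (\<Sum>l<n. l2_inner (w l) (w k) * y l))"
proof -
  have "l2_inner (synthesis w n y) (synthesis w n y)
          = (\<Sum>l<n. y l * (\<Sum>k<n. cnj (y k) * l2_inner (w l) (w k)))"
    unfolding l2_inner_synthesis_left[OF assms synthesis_l2[OF assms]]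
    unfolding synthesis_def
    using l2_inner_lincomb_right[of "{..<n}" w _ y] riesz_basis_l2[OF assms] by simp
  also have "\<dots> = (\<Sum>l<n. \<Sum>k<n. cnj (y k) * (l2_inner (w l) (w k) * y l))"
    by (simp add: sum_distrib_left ac_simps)
  also have "\<dots> = (\<Sum>k<n. \<Sum>l<n. cnj (y k) * (l2_inner (w l) (w k) * y l))"
    by (rule sum.swap)
  finally show ?thesis by (simp add: sum_distrib_left)
qed

lemma gram_trivial_kernel:
  assumes riesz: "is_riesz_basis w C D"
    and v: "v \<in> carrier_vec n" and Gv: "gram w n *\<^sub>v v = 0\<^sub>v n"
  shows "v = 0\<^sub>v n"
proof -
  have G: "gram w n \<in> carrier_mat n n" by (simp add: gram_def)
  have "(\<Sum>l<n. l2_inner (w l) (w k) * v $ l) = 0" if k: "k < n" for k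
    using arg_cong[OF Gv, of "\<lambda>u. u $ k"] mult_mat_vec_index_sum[OF G v k] k
    by (simp add: gram_def)
  then have "l2_inner (synthesis w n (\<lambda>l. v $ l)) (synthesis w n (\<lambda>l. v $ l)) = 0"
    using l2_inner_synthesis_self[OF riesz] by simp
  then have "(l2_norm (synthesis w n (\<lambda>l. v $ l)))\<^sup>2 = 0"
    using l2_inner_self[OF synthesis_l2[OF riesz]] by simp
  moreover have "0 < C" using riesz by (simp add: is_riesz_basis_def)
  ultimately have "(\<Sum>k<n. (cmod (v $ k))\<^sup>2) \<le> 0"
    using riesz_basis_synthesis_bounds[OF riesz, where n = n and z = "\<lambda>l. v $ l"]
    by (simp add: mult_le_0_iff)
  then have "\<forall>k<n. v $ k = 0"
    using sum_nonneg_eq_0_iff[of "{..<n}" "\<lambda>k. (cmod (v $ k))\<^sup>2"]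
    by (simp add: order_antisym sum_nonneg)
  then show ?thesis using v by (intro eq_vecI) auto
qed

lemma w_in_W_sub: "l < n \<Longrightarrow> w l \<in> W_sub w n"
  unfolding W_sub_def lin_span_def
  by (rule CollectI, rule exI[of _ "{l}"], rule exI[of _ "\<lambda>_. 1"]) auto

lemma synthesis_in_W_sub: "synthesis w n z \<in> W_sub w n"
  unfolding W_sub_def by (rule synthesis_in_lin_span) simp

lemma W_sub_l2: "is_riesz_basis w C D \<Longrightarrow> v \<in> W_sub w n \<Longrightarrow> v \<in> l2"
  unfolding W_sub_def lin_span_def using l2_lincomb riesz_basis_l2 by blast

lemma orth_compl_W_sub_synthesis:
  assumes riesz: "is_riesz_basis w C D" and u: "u \<in> orth_compl (W_sub w n)"
  shows "l2_inner (synthesis w n y) u = 0" "l2_inner u (synthesis w n y) = 0"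
proof -
  have ul2: "u \<in> l2" using u by (simp add: orth_compl_def)
  show "l2_inner u (synthesis w n y) = 0" using u synthesis_in_W_sub by (auto simp: orth_compl_def)
  have "l2_inner (w l) u = 0" if "l < n" for l
  proof -
    have "l2_inner u (w l) = 0" using u w_in_W_sub[OF that] by (auto simp: orth_compl_def)
    then show ?thesis
      using l2_inner_commute[OF ul2 riesz_basis_l2[OF riesz]] by (metis complex_cnj_zero)
  qed
  then show "l2_inner (synthesis w n y) u = 0" using l2_inner_synthesis_left[OF riesz ul2] by simp
qed

lemma orth_compl_W_sub_diff:
  assumes "is_riesz_basis w C D" "u \<in> orth_compl (W_sub w n)" "v \<in> orth_compl (W_sub w n)"
  shows "(\<lambda>j. u j - v j) \<in> orth_compl (W_sub w n)"
  using assms l2_diff l2_inner_diff_left W_sub_l2 by (simp add: orth_compl_def)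

lemma orth_compl_W_sub_scale:
  assumes "is_riesz_basis w C D" "u \<in> orth_compl (W_sub w n)"
  shows "(\<lambda>j. c * u j) \<in> orth_compl (W_sub w n)"
  using assms l2_scale l2_inner_scale_left W_sub_l2 by (simp add: orth_compl_def)

lemma orth_proj_orth_compl_unique:
  assumes riesz: "is_riesz_basis w C D" and h: "h \<in> l2"
    and p: "p \<in> orth_compl (W_sub w n)" and q: "q \<in> orth_compl (W_sub w n)"
    and hp: "\<forall>v\<in>orth_compl (W_sub w n). l2_inner (\<lambda>j. h j - p j) v = 0"
    and hq: "\<forall>v\<in>orth_compl (W_sub w n). l2_inner (\<lambda>j. h j - q j) v = 0"
  shows "p = q"
proof -
  define d where "d = (\<lambda>j. p j - q j)"
  have d: "d \<in> orth_compl (W_sub w n)" unfolding d_def by (rule orth_compl_W_sub_diff[OF riesz p q])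
  have l2: "p \<in> l2" "q \<in> l2" "d \<in> l2" using p q d by (auto simp: orth_compl_def)
  have "l2_inner d d = l2_inner (\<lambda>j. h j - q j) d - l2_inner (\<lambda>j. h j - p j) d"
    unfolding d_def[symmetric]
    using l2_inner_diff_left[OF l2_diff[OF h l2(2)] l2_diff[OF h l2(1)] l2(3)] by (simp add: d_def)
  also have "\<dots> = 0" using hp hq d by simp
  finally have "l2_norm d = 0" using l2_inner_self[OF l2(3)] by simp
  then show ?thesis using l2_norm_eq_0_imp[OF l2(3)] by (auto simp: d_def)
qed

lemma orth_compl_W_sub_residual_exists:
  assumes riesz: "is_riesz_basis w C D" and h: "h \<in> l2"
  shows "\<exists>y. (\<lambda>j. h j - synthesis w n y j) \<in> orth_compl (W_sub w n)"
proof -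
  have G: "gram w n \<in> carrier_mat n n" by (simp add: gram_def)
  have Ginv: "invertible_mat (gram w n)"
    by (rule invertible_mat_if_trivial_kernel[OF G gram_trivial_kernel[OF riesz]])
  define r where "r = vec n (\<lambda>k. l2_inner h (w k))"
  define yv where "yv = mat_inv (gram w n) *\<^sub>v r"
  have r: "r \<in> carrier_vec n" by (simp add: r_def)
  have yv: "yv \<in> carrier_vec n" using mat_inv_right(1)[OF G Ginv] r by (simp add: yv_def)
  have Gy: "gram w n *\<^sub>v yv = r"
    unfolding yv_def using assoc_mult_mat_vec[OF G mat_inv_right(1)[OF G Ginv] r, symmetric]
      mat_inv_right(2)[OF G Ginv] r by simp
  define y where "y = (\<lambda>l. yv $ l)"
  define p where "p = (\<lambda>j. h j - synthesis w n y j)"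
  have p: "p \<in> l2" unfolding p_def by (rule l2_diff[OF h synthesis_l2[OF riesz]])
  have pk: "l2_inner p (w k) = 0" if k: "k < n" for k
  proof -
    have "(\<Sum>l<n. l2_inner (w l) (w k) * y l) = l2_inner h (w k)"
      using arg_cong[OF Gy, of "\<lambda>u. u $ k"] mult_mat_vec_index_sum[OF G yv k] k
      by (simp add: gram_def y_def r_def)
    then show ?thesis
      unfolding p_def l2_inner_diff_left[OF h synthesis_l2[OF riesz] riesz_basis_l2[OF riesz]]
        l2_inner_synthesis_left[OF riesz riesz_basis_l2[OF riesz]]
      by (simp add: ac_simps)
  qed
  have "l2_inner p v = 0" if "v \<in> W_sub w n" for v
  proof -
    obtain F c where F: "finite F" "F \<subseteq> {..<n}" and v: "v = (\<lambda>j. \<Sum>k\<in>F. c k * w k j)"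
      using \<open>v \<in> W_sub w n\<close> unfolding W_sub_def lin_span_def by blast
    have "l2_inner p v = (\<Sum>k\<in>F. cnj (c k) * l2_inner p (w k))"
      unfolding v by (rule l2_inner_lincomb_right[OF F(1) riesz_basis_l2[OF riesz] p])
    also have "\<dots> = 0" using pk F(2) by (intro sum.neutral) auto
    finally show ?thesis .
  qed
  then show ?thesis using p unfolding p_def orth_compl_def by blast
qed

lemma P_perp_eqI:
  assumes riesz: "is_riesz_basis w C D" and h: "h \<in> l2"
    and p: "p \<in> orth_compl (W_sub w n)" and hp: "\<forall>j. h j - p j = synthesis w n y j"
  shows "P_perp w n h = p"
  unfolding P_perp_def orth_proj_def
proof (rule the_equality)
  have "\<forall>v\<in>orth_compl (W_sub w n). l2_inner (\<lambda>j. h j - p j) v = 0"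
    using orth_compl_W_sub_synthesis(1)[OF riesz] hp by (simp add: fun_eq_iff[symmetric])
  then show "p \<in> orth_compl (W_sub w n) \<and>
      (\<forall>v\<in>orth_compl (W_sub w n). l2_inner (\<lambda>j. h j - p j) v = 0)"
    using p by blast
  then show "q = p" if "q \<in> orth_compl (W_sub w n) \<and>
      (\<forall>v\<in>orth_compl (W_sub w n). l2_inner (\<lambda>j. h j - q j) v = 0)" for q
    using orth_proj_orth_compl_unique[OF riesz h] that by blast
qed

lemma P_perp_decomposition:
  assumes riesz: "is_riesz_basis w C D" and h: "h \<in> l2"
  obtains y where "P_perp w n h \<in> orth_compl (W_sub w n)"
    and "\<And>j. h j - P_perp w n h j = synthesis w n y j"
proof -
  obtain y where "(\<lambda>j. h j - synthesis w n y j) \<in> orth_compl (W_sub w n)"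
    using orth_compl_W_sub_residual_exists[OF riesz h] by blast
  moreover from this have "P_perp w n h = (\<lambda>j. h j - synthesis w n y j)"
    by (rule P_perp_eqI[OF riesz h, where y = y]) auto
  ultimately show ?thesis using that[of y] by simp
qed

lemma P_perp_orth_compl:
  "is_riesz_basis w C D \<Longrightarrow> h \<in> l2 \<Longrightarrow> P_perp w n h \<in> orth_compl (W_sub w n)"
  by (metis P_perp_decomposition)

lemma P_perp_l2: "is_riesz_basis w C D \<Longrightarrow> h \<in> l2 \<Longrightarrow> P_perp w n h \<in> l2"
  using P_perp_orth_compl by (auto simp: orth_compl_def)

lemma P_perp_id:
  assumes "is_riesz_basis w C D" "u \<in> orth_compl (W_sub w n)"
  shows "P_perp w n u = u"
  using assms by (intro P_perp_eqI[where y = "\<lambda>_. 0"]) (auto simp: orth_compl_def synthesis_def)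

lemma P_perp_norm_le:
  assumes riesz: "is_riesz_basis w C D" and h: "h \<in> l2"
  shows "l2_norm (P_perp w n h) \<le> l2_norm h"
proof -
  obtain y where P: "P_perp w n h \<in> orth_compl (W_sub w n)"
    and y: "\<And>j. h j - P_perp w n h j = synthesis w n y j"
    using P_perp_decomposition[OF riesz h] by blast
  have Pl2: "P_perp w n h \<in> l2" using P by (simp add: orth_compl_def)
  have "h = (\<lambda>j. P_perp w n h j + synthesis w n y j)"
    using y by (metis add.commute diff_eq_eq)
  then have h_norm: "l2_norm h = l2_norm (\<lambda>j. P_perp w n h j + synthesis w n y j)"
    by (rule arg_cong)
  have "(l2_norm h)\<^sup>2 = (l2_norm (P_perp w n h))\<^sup>2 + (l2_norm (synthesis w n y))\<^sup>2"
    unfolding h_norm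
    by (rule l2_pythagoras[OF Pl2 synthesis_l2[OF riesz] orth_compl_W_sub_synthesis(2)[OF riesz P]])
  then have "(l2_norm (P_perp w n h))\<^sup>2 \<le> (l2_norm h)\<^sup>2" by simp
  then show ?thesis using l2_norm_nonneg[OF h] by (rule power2_le_imp_le)
qed

section \<open>Orthonormal families in the kernel of a set of rows\<close>

definition fin_inner :: "nat \<Rightarrow> (nat \<Rightarrow> complex) \<Rightarrow> (nat \<Rightarrow> complex) \<Rightarrow> complex" where
  "fin_inner n x y = (\<Sum>i<n. x i * cnj (y i))"

definition row_apply :: "(nat \<Rightarrow> nat \<Rightarrow> complex) \<Rightarrow> nat \<Rightarrow> nat \<Rightarrow> (nat \<Rightarrow> complex) \<Rightarrow> complex" where
  "row_apply a n j z = (\<Sum>k<n. a j k * z k)"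

definition orthonormal_family :: "nat \<Rightarrow> nat \<Rightarrow> (nat \<Rightarrow> nat \<Rightarrow> complex) \<Rightarrow> bool" where
  "orthonormal_family n K Z \<longleftrightarrow>
     (\<forall>r<K. \<forall>r'<K. fin_inner n (Z r) (Z r') = (if r = r' then 1 else 0))"

definition kernel_family ::
    "(nat \<Rightarrow> nat \<Rightarrow> complex) \<Rightarrow> nat \<Rightarrow> nat set \<Rightarrow> nat \<Rightarrow> (nat \<Rightarrow> nat \<Rightarrow> complex) \<Rightarrow> bool" where
  "kernel_family a n S K Z \<longleftrightarrow>
     orthonormal_family n K Z \<and> (\<forall>r<K. \<forall>j\<in>S. row_apply a n j (Z r) = 0)"

definition kernel_dim :: "(nat \<Rightarrow> nat \<Rightarrow> complex) \<Rightarrow> nat \<Rightarrow> nat set \<Rightarrow> nat" where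
  "kernel_dim a n S = (GREATEST K. \<exists>Z. kernel_family a n S K Z)"

lemma fin_inner_commute: "fin_inner n y x = cnj (fin_inner n x y)"
  unfolding fin_inner_def by (simp add: ac_simps)

lemma fin_inner_self: "fin_inner n x x = complex_of_real (\<Sum>i<n. (cmod (x i))\<^sup>2)"
  unfolding fin_inner_def by (simp add: mult_cnj_self)

lemma fin_inner_lincomb_left:
  "fin_inner n (\<lambda>i. \<Sum>r\<in>F. c r * f r i) y = (\<Sum>r\<in>F. c r * fin_inner n (f r) y)"
  unfolding fin_inner_def by (simp add: sum_distrib_right sum_distrib_left sum.swap[of _ F] mult.assoc)

lemma fin_inner_lincomb_right:
  "fin_inner n y (\<lambda>i. \<Sum>r\<in>F. c r * f r i) = (\<Sum>r\<in>F. cnj (c r) * fin_inner n y (f r))"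
  by (subst (1 2) fin_inner_commute) (simp add: fin_inner_lincomb_left)

lemma fin_inner_scale_left: "fin_inner n (\<lambda>i. c * x i) y = c * fin_inner n x y"
  unfolding fin_inner_def by (simp add: sum_distrib_left mult.assoc)

lemma fin_inner_diff_left: "fin_inner n (\<lambda>i. x i - y i) z = fin_inner n x z - fin_inner n y z"
  unfolding fin_inner_def by (simp add: left_diff_distrib sum_subtractf)

lemma fin_inner_diff_right: "fin_inner n z (\<lambda>i. x i - y i) = fin_inner n z x - fin_inner n z y"
  by (subst (1 2 3) fin_inner_commute) (simp add: fin_inner_diff_left)

lemma row_apply_cong: "(\<And>i. i < n \<Longrightarrow> x i = x' i) \<Longrightarrow> row_apply a n j x = row_apply a n j x'"
  unfolding row_apply_def by (rule sum.cong) auto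

lemma row_apply_add: "row_apply a n j (\<lambda>i. x i + y i) = row_apply a n j x + row_apply a n j y"
  unfolding row_apply_def by (simp add: distrib_left sum.distrib)

lemma row_apply_diff: "row_apply a n j (\<lambda>i. x i - y i) = row_apply a n j x - row_apply a n j y"
  unfolding row_apply_def by (simp add: right_diff_distrib sum_subtractf)

lemma row_apply_lincomb:
  "row_apply a n j (\<lambda>i. \<Sum>r\<in>F. c r * f r i) = (\<Sum>r\<in>F. c r * row_apply a n j (f r))"
  unfolding row_apply_def by (simp add: sum_distrib_left sum.swap[of _ F] ac_simps)

lemma row_apply_scale: "row_apply a n j (\<lambda>i. c * x i) = c * row_apply a n j x"
  unfolding row_apply_def by (simp add: sum_distrib_left ac_simps)

lemma row_apply_eq_fin_inner: "row_apply a n j z = fin_inner n z (\<lambda>k. cnj (a j k))"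
  unfolding row_apply_def fin_inner_def by (simp add: ac_simps)

lemma fin_inner_normalized:
  assumes pos: "0 < (\<Sum>i<n. (cmod (v i))\<^sup>2)"
  defines "\<sigma> \<equiv> complex_of_real (sqrt (\<Sum>i<n. (cmod (v i))\<^sup>2))"
  shows "fin_inner n (\<lambda>i. v i / \<sigma>) (\<lambda>i. v i / \<sigma>) = 1"
proof -
  have "fin_inner n (\<lambda>i. v i / \<sigma>) (\<lambda>i. v i / \<sigma>) = fin_inner n v v / (\<sigma> * cnj \<sigma>)"
    unfolding fin_inner_def by (simp add: sum_divide_distrib)
  also have "\<sigma> * cnj \<sigma> = fin_inner n v v"
    using pos by (simp add: \<sigma>_def fin_inner_self flip: of_real_mult)
  also have "fin_inner n v v \<noteq> 0"
    unfolding fin_inner_self of_real_eq_0_iff using pos by linarith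
  then have "fin_inner n v v / fin_inner n v v = 1" by simp
  finally show ?thesis .
qed

lemma bessel_inequality:
  assumes Z: "orthonormal_family n K Z"
  shows "(\<Sum>r<K. (cmod (fin_inner n u (Z r)))\<^sup>2) \<le> (\<Sum>i<n. (cmod (u i))\<^sup>2)"
proof -
  define c where "c r = fin_inner n u (Z r)" for r
  define v where "v = (\<lambda>i. u i - (\<Sum>r<K. c r * Z r i))"
  have Zv: "fin_inner n (Z r) v = 0" if r: "r < K" for r
  proof -
    have "(\<Sum>r'<K. cnj (c r') * fin_inner n (Z r) (Z r')) = (\<Sum>r'<K. if r' = r then cnj (c r) else 0)"
      using Z r unfolding orthonormal_family_def by (intro sum.cong) auto
    then show ?thesis
      using r unfolding v_def fin_inner_diff_right fin_inner_lincomb_right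
      by (simp add: c_def fin_inner_commute[of n "Z r"])
  qed
  have "fin_inner n v v = fin_inner n u v"
    unfolding v_def fin_inner_diff_left fin_inner_lincomb_left
    using Zv by (simp add: v_def)
  also have "\<dots> = fin_inner n u u - (\<Sum>r<K. cnj (c r) * c r)"
    unfolding v_def fin_inner_diff_right fin_inner_lincomb_right c_def ..
  also have "(\<Sum>r<K. cnj (c r) * c r) = complex_of_real (\<Sum>r<K. (cmod (c r))\<^sup>2)"
    by (simp add: mult.commute mult_cnj_self)
  finally have "(\<Sum>i<n. (cmod (v i))\<^sup>2) = (\<Sum>i<n. (cmod (u i))\<^sup>2) - (\<Sum>r<K. (cmod (c r))\<^sup>2)"
    unfolding fin_inner_self by (metis of_real_diff of_real_eq_iff)
  moreover have "0 \<le> (\<Sum>i<n. (cmod (v i))\<^sup>2)" by (simp add: sum_nonneg)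
  ultimately show ?thesis by (simp add: c_def)
qed

lemma orthonormal_family_norm:
  "orthonormal_family n K Z \<Longrightarrow> r < K \<Longrightarrow> (\<Sum>i<n. (cmod (Z r i))\<^sup>2) = 1"
  unfolding orthonormal_family_def using fin_inner_self[of n "Z r" ] by (metis of_real_eq_1_iff)

lemma orthonormal_family_le:
  assumes Z: "orthonormal_family n K Z"
  shows "K \<le> n"
proof -
  have column: "(\<Sum>r<K. (cmod (Z r i))\<^sup>2) \<le> 1" if i: "i < n" for i
  proof -
    define e where "e = (\<lambda>i'. if i' = i then (1::complex) else 0)"
    have "fin_inner n e (Z r) = (\<Sum>i'<n. if i' = i then cnj (Z r i) else 0)" for r
      unfolding fin_inner_def by (rule sum.cong) (auto simp: e_def)
    then have "fin_inner n e (Z r) = cnj (Z r i)" for r using i by simp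
    moreover have "(\<Sum>i'<n. (cmod (e i'))\<^sup>2) = (\<Sum>i'<n. if i' = i then 1 else 0)"
      by (rule sum.cong) (auto simp: e_def)
    ultimately show ?thesis using bessel_inequality[OF Z, of e] i by simp
  qed
  have "real K = (\<Sum>r<K. \<Sum>i<n. (cmod (Z r i))\<^sup>2)"
    using orthonormal_family_norm[OF Z] by simp
  also have "\<dots> = (\<Sum>i<n. \<Sum>r<K. (cmod (Z r i))\<^sup>2)" by (rule sum.swap)
  also have "\<dots> \<le> real n" using sum_mono[of "{..<n}", OF column] by simp
  finally show ?thesis by simp
qed

lemma kernel_family_extend:
  assumes Z: "kernel_family a n S K Z"
    and v_ker: "\<forall>j\<in>S. row_apply a n j v = 0" and v_orth: "\<forall>r<K. fin_inner n v (Z r) = 0"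
    and v_pos: "0 < (\<Sum>i<n. (cmod (v i))\<^sup>2)"
  shows "\<exists>Z'. kernel_family a n S (Suc K) Z'"
proof -
  define \<sigma> where "\<sigma> = complex_of_real (sqrt (\<Sum>i<n. (cmod (v i))\<^sup>2))"
  define Z' where "Z' = Z(K := (\<lambda>i. v i / \<sigma>))"
  have new_orth: "fin_inner n (\<lambda>i. v i / \<sigma>) (Z r) = 0" if "r < K" for r
    using fin_inner_scale_left[of n "1 / \<sigma>" v "Z r"] v_orth that by simp
  have "orthonormal_family n (Suc K) Z'"
    unfolding orthonormal_family_def Z'_def
    using Z fin_inner_normalized[OF v_pos] new_orth fin_inner_commute[of n "Z _" "\<lambda>i. v i / \<sigma>"]
    unfolding kernel_family_def orthonormal_family_def \<sigma>_def[symmetric]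
    by (auto simp: less_Suc_eq)
  moreover have "row_apply a n j (\<lambda>i. v i / \<sigma>) = 0" if "j \<in> S" for j
    using row_apply_scale[of a n j "1 / \<sigma>" v] v_ker that by simp
  ultimately have "kernel_family a n S (Suc K) Z'"
    using Z unfolding kernel_family_def by (auto simp: Z'_def less_Suc_eq)
  then show ?thesis by blast
qed

lemma kernel_dim_family: "\<exists>Z. kernel_family a n S (kernel_dim a n S) Z"
  and kernel_dim_maximal: "kernel_family a n S K Z \<Longrightarrow> K \<le> kernel_dim a n S"
proof -
  have zero: "\<exists>Z. kernel_family a n S 0 Z"
    by (simp add: kernel_family_def orthonormal_family_def)
  have bound: "\<And>K. (\<exists>Z. kernel_family a n S K Z) \<Longrightarrow> K \<le> n"
    using orthonormal_family_le by (auto simp: kernel_family_def)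
  show "\<exists>Z. kernel_family a n S (kernel_dim a n S) Z"
    unfolding kernel_dim_def
    by (rule GreatestI_nat[where P = "\<lambda>K. \<exists>Z. kernel_family a n S K Z", OF zero bound])
  show "kernel_family a n S K Z \<Longrightarrow> K \<le> kernel_dim a n S"
    unfolding kernel_dim_def by (rule Greatest_le_nat[OF _ bound]) blast
qed

lemma kernel_dim_le: "kernel_dim a n S \<le> n"
  using kernel_dim_family[of a n S] orthonormal_family_le by (auto simp: kernel_family_def)

lemma kernel_family_mono:
  "kernel_family a n S K Z \<Longrightarrow> S' \<subseteq> S \<Longrightarrow> K' \<le> K \<Longrightarrow> kernel_family a n S' K' Z"
  unfolding kernel_family_def orthonormal_family_def by auto

lemma kernel_dim_antimono: "S \<subseteq> S' \<Longrightarrow> kernel_dim a n S' \<le> kernel_dim a n S"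
  using kernel_dim_family[of a n S'] kernel_family_mono kernel_dim_maximal by blast

lemma kernel_dim_eq_0_imp:
  assumes "kernel_dim a n S = 0" and z: "\<forall>j\<in>S. row_apply a n j z = 0" and i: "i < n"
  shows "z i = 0"
proof (rule ccontr)
  assume "z i \<noteq> 0"
  then have "0 < (\<Sum>i<n. (cmod (z i))\<^sup>2)"
    using i by (intro sum_pos2[of _ i]) auto
  then obtain Z where "kernel_family a n S 1 Z"
    using kernel_family_extend[of a n S 0 undefined z] z
    by (auto simp: kernel_family_def orthonormal_family_def)
  then show False using kernel_dim_maximal assms(1) by fastforce
qed

lemma kernel_family_spans:
  assumes Z: "kernel_family a n S (kernel_dim a n S) Z"
    and u: "\<forall>j\<in>S. row_apply a n j u = 0" and i: "i < n"
  shows "u i = (\<Sum>r<kernel_dim a n S. fin_inner n u (Z r) * Z r i)"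
proof -
  let ?K = "kernel_dim a n S"
  define v where "v = (\<lambda>i. u i - (\<Sum>r<?K. fin_inner n u (Z r) * Z r i))"
  have v_ker: "\<forall>j\<in>S. row_apply a n j v = 0"
    using u Z unfolding v_def kernel_family_def by (simp add: row_apply_diff row_apply_lincomb)
  have v_orth: "\<forall>r<?K. fin_inner n v (Z r) = 0"
  proof (intro allI impI)
    fix r assume r: "r < ?K"
    have "(\<Sum>r'<?K. fin_inner n u (Z r') * fin_inner n (Z r') (Z r))
            = (\<Sum>r'<?K. if r' = r then fin_inner n u (Z r) else 0)"
      using Z r unfolding kernel_family_def orthonormal_family_def by (intro sum.cong) auto
    then show "fin_inner n v (Z r) = 0"
      using r unfolding v_def fin_inner_diff_left fin_inner_lincomb_left by simp
  qed
  have "\<not> 0 < (\<Sum>i<n. (cmod (v i))\<^sup>2)"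
    using kernel_family_extend[OF Z v_ker v_orth] kernel_dim_maximal by fastforce
  moreover have "0 \<le> (\<Sum>i<n. (cmod (v i))\<^sup>2)" by (simp add: sum_nonneg)
  ultimately have "(\<Sum>i<n. (cmod (v i))\<^sup>2) = 0" by linarith
  then have "v i = 0" using i sum_nonneg_eq_0_iff[of "{..<n}" "\<lambda>i. (cmod (v i))\<^sup>2"] by simp
  then show ?thesis by (simp add: v_def)
qed

lemma kernel_dim_insert_less:
  assumes Z: "kernel_family a n S (kernel_dim a n S) Z"
    and j: "\<exists>r < kernel_dim a n S. row_apply a n j (Z r) \<noteq> 0"
  shows "kernel_dim a n (insert j S) < kernel_dim a n S"
proof (rule ccontr)
  let ?K = "kernel_dim a n S"
  assume "\<not> kernel_dim a n (insert j S) < ?K"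
  then obtain Y where Y: "kernel_family a n (insert j S) ?K Y"
    using kernel_dim_family[of a n "insert j S"] kernel_family_mono[of a n "insert j S"]
    by (meson not_less order_refl)
  then have YS: "kernel_family a n S ?K Y" by (simp add: kernel_family_def)
  obtain r where r: "r < ?K" "row_apply a n j (Z r) \<noteq> 0" using j by blast
  have "\<forall>j'\<in>S. row_apply a n j' (Z r) = 0" using Z r(1) by (simp add: kernel_family_def)
  then have "row_apply a n j (Z r) = row_apply a n j (\<lambda>i. \<Sum>s<?K. fin_inner n (Z r) (Y s) * Y s i)"
    using kernel_family_spans[OF YS] by (intro row_apply_cong) simp
  also have "\<dots> = 0"
    using Y unfolding row_apply_lincomb kernel_family_def by simp
  finally show False using r(2) by simp
qed

lemma kernel_dim_insert_le:
  assumes Z: "kernel_family a n S (kernel_dim a n S) Z"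
  shows "kernel_dim a n (insert j S) + (if \<exists>r<kernel_dim a n S. row_apply a n j (Z r) \<noteq> 0 then 1 else 0)
           \<le> kernel_dim a n S"
  using kernel_dim_insert_less[OF Z, of j] kernel_dim_antimono[OF subset_insertI[of S j], of a n]
  by (cases "\<exists>r<kernel_dim a n S. row_apply a n j (Z r) \<noteq> 0") auto

section \<open>Sampling rows with leverage-score probabilities\<close>

lemma nn_integral_embed_pmf_nat:
  fixes p :: "nat \<Rightarrow> real"
  assumes p_nonneg: "\<And>j. 0 \<le> p j" and p_sums: "p sums 1"
  shows "(\<integral>\<^sup>+j. f j \<partial>measure_pmf (embed_pmf p)) = (\<Sum>j. ennreal (p j) * f j)"
proof -
  have "(\<integral>\<^sup>+j. ennreal (p j) \<partial>count_space UNIV) = (\<Sum>j. ennreal (p j))"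
    by (rule nn_integral_count_space_nat)
  also have "\<dots> = 1" using suminf_ennreal_eq[OF p_nonneg p_sums] by simp
  finally have "pmf (embed_pmf p) j = p j" for j
    using pmf_embed_pmf[of p j] p_nonneg by blast
  then show ?thesis
    by (simp add: nn_integral_measure_pmf nn_integral_count_space_nat)
qed

lemma one_minus_power_le:
  fixes x \<delta> :: real
  assumes x: "0 < x" "x \<le> 1" and ln_le: "ln (2 * real n / \<delta>) \<le> x * real m"
    and n: "1 \<le> n" and \<delta>: "0 < \<delta>"
  shows "real n * (1 - x) ^ m \<le> \<delta>"
proof -
  have "(1 - x) ^ m \<le> exp (- x) ^ m"
    using exp_ge_add_one_self[of "-x"] x by (intro power_mono) auto
  also have "\<dots> = exp (- (x * real m))" by (simp add: exp_of_nat_mult[symmetric] ac_simps)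
  also have "\<dots> \<le> exp (- ln (2 * real n / \<delta>))" using ln_le by simp
  also have "\<dots> = \<delta> / (2 * real n)" using n \<delta> by (simp add: exp_minus ln_div exp_diff)
  finally have "real n * (1 - x) ^ m \<le> real n * (\<delta> / (2 * real n))"
    using n by (intro mult_left_mono) auto
  also have "\<dots> = \<delta> / 2" using n by simp
  finally show ?thesis using \<delta> by simp
qed

locale row_sampling =
  fixes a :: "nat \<Rightarrow> nat \<Rightarrow> complex" and n :: nat and \<alpha> T :: real and p :: "nat \<Rightarrow> real"
  assumes rows_square_summable: "\<And>z. summable (\<lambda>j. (cmod (row_apply a n j z))\<^sup>2)"
    and rows_lower_bound:
      "\<And>z. \<alpha> * (\<Sum>i<n. (cmod (z i))\<^sup>2) \<le> (\<Sum>j. (cmod (row_apply a n j z))\<^sup>2)"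
    and p_eq: "\<And>j. p j = (\<Sum>k<n. (cmod (a j k))\<^sup>2) / T"
    and T_pos: "0 < T" and p_sums: "p sums 1"
begin

lemma p_nonneg: "0 \<le> p j"
  using T_pos by (simp add: p_eq sum_nonneg)

lemma orthonormal_family_missed_mass:
  assumes Z: "orthonormal_family n K Z"
  shows "real K * \<alpha> / T \<le> (\<Sum>j. if \<exists>r<K. row_apply a n j (Z r) \<noteq> 0 then p j else 0)"
    (is "_ \<le> (\<Sum>j. ?q j)")
proof -
  define c where "c j = (\<Sum>r<K. (cmod (row_apply a n j (Z r)))\<^sup>2)" for j
  have c_summable: "summable c"
    unfolding c_def using rows_square_summable by (intro summable_sum)
  have "real K * \<alpha> = (\<Sum>r<K. \<alpha> * (\<Sum>i<n. (cmod (Z r i))\<^sup>2))"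
    using orthonormal_family_norm[OF Z] by simp
  also have "\<dots> \<le> (\<Sum>r<K. \<Sum>j. (cmod (row_apply a n j (Z r)))\<^sup>2)"
    by (intro sum_mono rows_lower_bound)
  also have "\<dots> = (\<Sum>j. c j)"
    unfolding c_def using rows_square_summable by (intro suminf_sum[symmetric])
  finally have "real K * \<alpha> / T \<le> (\<Sum>j. c j / T)"
    using T_pos suminf_divide[OF c_summable, of T] by (simp add: divide_right_mono)
  also have "\<dots> \<le> (\<Sum>j. ?q j)"
  proof (rule suminf_le)
    show "c j / T \<le> ?q j" for j
    proof (cases "\<exists>r<K. row_apply a n j (Z r) \<noteq> 0")
      case True
      have "c j = (\<Sum>r<K. (cmod (fin_inner n (\<lambda>k. cnj (a j k)) (Z r)))\<^sup>2)"
        unfolding c_def row_apply_eq_fin_inner by (simp add: fin_inner_commute[of n "Z _"])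
      also have "\<dots> \<le> p j * T"
        using bessel_inequality[OF Z, of "\<lambda>k. cnj (a j k)"] T_pos by (simp add: p_eq)
      finally show ?thesis using True T_pos by (simp add: pos_divide_le_eq)
    next
      case False
      then show ?thesis by (simp add: c_def p_nonneg)
    qed
    show "summable (\<lambda>j. c j / T)" by (rule summable_divide[OF c_summable])
    show "summable ?q"
      using p_sums p_nonneg by (auto simp: sums_iff intro!: summable_comparison_test[of _ p])
  qed
  finally show ?thesis .
qed

lemma nn_integral_kernel_dim_insert_le:
  assumes Z: "kernel_family a n S (kernel_dim a n S) Z"
  shows "(\<integral>\<^sup>+j. ennreal (real (kernel_dim a n (insert j S))) \<partial>measure_pmf (embed_pmf p))
           \<le> ennreal (real (kernel_dim a n S)
                - (\<Sum>j. if \<exists>r<kernel_dim a n S. row_apply a n j (Z r) \<noteq> 0 then p j else 0))"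
proof -
  define K where "K = kernel_dim a n S"
  define E where "E = {j. \<exists>r<K. row_apply a n j (Z r) \<noteq> 0}"
  define q where "q j = (if j \<in> E then p j else 0)" for j
  have step: "real (kernel_dim a n (insert j S)) \<le> real K - (if j \<in> E then 1 else 0)" for j
    using kernel_dim_insert_le[OF Z, of j] unfolding K_def E_def
    by (cases "\<exists>r<kernel_dim a n S. row_apply a n j (Z r) \<noteq> 0") auto
  have p_summable: "summable p" and p_sum: "suminf p = 1" using p_sums by (auto simp: sums_iff)
  have q_summable: "summable q"
    by (rule summable_comparison_test[OF _ p_summable]) (auto simp: q_def p_nonneg)
  have pq: "p j * (real K - (if j \<in> E then 1 else 0)) = real K * p j - q j" for j
    by (simp add: q_def algebra_simps)
  have "(\<integral>\<^sup>+j. ennreal (real (kernel_dim a n (insert j S))) \<partial>measure_pmf (embed_pmf p))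
      = (\<Sum>j. ennreal (p j) * ennreal (real (kernel_dim a n (insert j S))))"
    by (rule nn_integral_embed_pmf_nat[OF p_nonneg p_sums])
  also have "\<dots> \<le> (\<Sum>j. ennreal (real K * p j - q j))"
  proof (intro suminf_le allI)
    fix j
    have "ennreal (p j) * ennreal (real (kernel_dim a n (insert j S)))
            = ennreal (p j * real (kernel_dim a n (insert j S)))"
      by (simp add: ennreal_mult p_nonneg)
    also have "\<dots> \<le> ennreal (real K * p j - q j)"
      unfolding pq[symmetric] using step[of j] p_nonneg[of j]
      by (intro ennreal_leI mult_left_mono) auto
    finally show "ennreal (p j) * ennreal (real (kernel_dim a n (insert j S)))
                    \<le> ennreal (real K * p j - q j)" .
  qed simp_all
  also have "\<dots> = ennreal (\<Sum>j. real K * p j - q j)"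
  proof (rule suminf_ennreal2)
    show "0 \<le> real K * p j - q j" for j
      unfolding pq[symmetric] using step[of j] p_nonneg[of j] by simp
    show "summable (\<lambda>j. real K * p j - q j)"
      by (intro summable_diff summable_mult p_summable q_summable)
  qed
  also have "(\<Sum>j. real K * p j - q j) = real K - (\<Sum>j. q j)"
    using suminf_diff[OF summable_mult[OF p_summable] q_summable] suminf_mult[OF p_summable]
    by (simp add: p_sum)
  finally show ?thesis by (simp add: K_def E_def q_def)
qed

lemma expected_kernel_dim_insert:
  "(\<integral>\<^sup>+j. ennreal (real (kernel_dim a n (insert j S))) \<partial>measure_pmf (embed_pmf p))
     \<le> ennreal ((1 - \<alpha> / T) * real (kernel_dim a n S))"
proof -
  obtain Z where Z: "kernel_family a n S (kernel_dim a n S) Z"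
    using kernel_dim_family by blast
  have "real (kernel_dim a n S)
          - (\<Sum>j. if \<exists>r<kernel_dim a n S. row_apply a n j (Z r) \<noteq> 0 then p j else 0)
        \<le> (1 - \<alpha> / T) * real (kernel_dim a n S)"
    using orthonormal_family_missed_mass[of _ Z] Z by (simp add: kernel_family_def algebra_simps)
  then show ?thesis
    using nn_integral_kernel_dim_insert_le[OF Z] by (meson ennreal_leI order_trans)
qed

lemma expected_kernel_dim:
  assumes \<alpha>_le: "\<alpha> \<le> T"
  shows "(\<integral>\<^sup>+\<omega>. ennreal (real (kernel_dim a n (\<omega> ` {..<m}))) \<partial>measure_pmf (sample_pmf p m))
           \<le> ennreal (real n * (1 - \<alpha> / T) ^ m)"
proof (induction m)
  case 0
  have "(\<integral>\<^sup>+\<omega>. ennreal (real (kernel_dim a n (\<omega> ` {..<0}))) \<partial>measure_pmf (sample_pmf p 0))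
      = ennreal (real (kernel_dim a n {}))"
    unfolding sample_pmf_def by (simp add: pmf_Pi_empty nn_integral_return_pmf)
  then show ?case using kernel_dim_le[of a n "{}"] by (simp add: ennreal_leI)
next
  case (Suc m)
  let ?P = "\<lambda>_::nat. embed_pmf p"
  let ?q = "1 - \<alpha> / T"
  have q_nonneg: "0 \<le> ?q" using \<alpha>_le T_pos by simp
  have "sample_pmf p (Suc m) = do {y \<leftarrow> ?P m; f \<leftarrow> sample_pmf p m; return_pmf (f(m := y))}"
    unfolding sample_pmf_def lessThan_Suc by (rule Pi_pmf_insert') auto
  also have "\<dots> = do {f \<leftarrow> sample_pmf p m; y \<leftarrow> ?P m; return_pmf (f(m := y))}"
    by (rule bind_commute_pmf)
  moreover have "(f(m := y)) ` {..<Suc m} = insert y (f ` {..<m})" for f :: "nat \<Rightarrow> nat" and y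
    by (auto simp: lessThan_Suc)
  ultimately have "(\<integral>\<^sup>+\<omega>. ennreal (real (kernel_dim a n (\<omega> ` {..<Suc m}))) \<partial>measure_pmf (sample_pmf p (Suc m)))
      = (\<integral>\<^sup>+f. \<integral>\<^sup>+y. ennreal (real (kernel_dim a n (insert y (f ` {..<m}))))
            \<partial>measure_pmf (embed_pmf p) \<partial>measure_pmf (sample_pmf p m))"
    by (simp add: nn_integral_bind_pmf nn_integral_return_pmf)
  also have "\<dots> \<le> (\<integral>\<^sup>+f. ennreal ?q * ennreal (real (kernel_dim a n (f ` {..<m})))
                     \<partial>measure_pmf (sample_pmf p m))"
    using expected_kernel_dim_insert q_nonneg by (intro nn_integral_mono) (simp add: ennreal_mult)
  also have "\<dots> = ennreal ?q * (\<integral>\<^sup>+f. ennreal (real (kernel_dim a n (f ` {..<m})))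
                     \<partial>measure_pmf (sample_pmf p m))"
    by (rule nn_integral_cmult) simp
  also have "\<dots> \<le> ennreal ?q * ennreal (real n * ?q ^ m)"
    by (rule mult_left_mono[OF Suc.IH]) simp
  also have "\<dots> = ennreal (real n * ?q ^ Suc m)"
    using q_nonneg by (simp add: ennreal_mult[symmetric] ac_simps)
  finally show ?case .
qed

lemma prob_kernel_dim_eq_0:
  assumes "\<alpha> \<le> T"
  shows "1 - real n * (1 - \<alpha> / T) ^ m \<le>
           measure_pmf.prob (sample_pmf p m) {\<omega>. kernel_dim a n (\<omega> ` {..<m}) = 0}"
proof -
  let ?M = "sample_pmf p m" and ?A = "{\<omega>. kernel_dim a n (\<omega> ` {..<m}) \<noteq> 0}"
  have "emeasure (measure_pmf ?M) ?A = (\<integral>\<^sup>+\<omega>. indicator ?A \<omega> \<partial>measure_pmf ?M)"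
    by simp
  also have "\<dots> \<le> (\<integral>\<^sup>+\<omega>. ennreal (real (kernel_dim a n (\<omega> ` {..<m}))) \<partial>measure_pmf ?M)"
    by (rule nn_integral_mono) (auto simp: indicator_def)
  also have "\<dots> \<le> ennreal (real n * (1 - \<alpha> / T) ^ m)"
    by (rule expected_kernel_dim[OF assms])
  finally have "measure_pmf.prob ?M ?A \<le> real n * (1 - \<alpha> / T) ^ m"
    using assms T_pos by (simp add: measure_pmf.emeasure_eq_measure ennreal_le_iff)
  moreover have "measure_pmf.prob ?M (UNIV - ?A) = 1 - measure_pmf.prob ?M ?A"
    using measure_pmf.prob_compl[of ?A ?M] by simp
  moreover have "UNIV - ?A = {\<omega>. kernel_dim a n (\<omega> ` {..<m}) = 0}" by auto
  ultimately show ?thesis by simp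
qed

end

section \<open>The cross-Gramian of the frame and the Riesz basis\<close>

definition coef :: "(nat \<Rightarrow> seq) \<Rightarrow> (nat \<Rightarrow> seq) \<Rightarrow> nat \<Rightarrow> nat \<Rightarrow> complex" where
  "coef s w j k = l2_inner (w k) (s j)"

lemma U_iota_unit_vec: "l < n \<Longrightarrow> U_iota s w n (unit_vec n l) j = coef s w j l"
proof -
  assume l: "l < n"
  have "W_iota w n (unit_vec n l) = w l"
  proof
    fix j
    have "W_iota w n (unit_vec n l) j = (\<Sum>k<n. if k = l then w l j else 0)"
      unfolding W_iota_def using l by (intro sum.cong) auto
    then show "W_iota w n (unit_vec n l) j = w l j" using l by simp
  qed
  then show ?thesis by (simp add: U_iota_def analysis_op_def coef_def)
qed

locale frame_riesz_subspace =
  fixes s w :: "nat \<Rightarrow> seq" and A B C D :: real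
  assumes frame: "is_frame s A B" and riesz: "is_riesz_basis w C D"
    and span_subset: "closed_span w \<subseteq> closed_span s"
begin

lemma AC_pos: "0 < A * C"
  using frame riesz by (simp add: is_frame_def is_riesz_basis_def)

lemma BD_pos: "0 < B * D"
  using frame riesz by (simp add: is_frame_def is_riesz_basis_def)

lemma l2_inner_frame_coef: "l2_inner (s j) (w k) = cnj (coef s w j k)"
  unfolding coef_def
  by (rule l2_inner_commute[OF riesz_basis_l2[OF riesz] frame_l2[OF frame], symmetric])

lemma row_apply_coef: "row_apply (coef s w) n j z = l2_inner (synthesis w n z) (s j)"
  unfolding row_apply_def coef_def l2_inner_synthesis_left[OF riesz frame_l2[OF frame]]
  by (simp add: ac_simps)

lemma frame_bounds_synthesis:
  "summable (\<lambda>j. (cmod (l2_inner (synthesis w n z) (s j)))\<^sup>2) \<and>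
   A * (l2_norm (synthesis w n z))\<^sup>2 \<le> (\<Sum>j. (cmod (l2_inner (synthesis w n z) (s j)))\<^sup>2) \<and>
   (\<Sum>j. (cmod (l2_inner (synthesis w n z) (s j)))\<^sup>2) \<le> B * (l2_norm (synthesis w n z))\<^sup>2"
  using frame span_subset synthesis_in_closed_span[OF riesz] unfolding is_frame_def by blast

lemma coef_rows_lower_bound:
  "summable (\<lambda>j. (cmod (row_apply (coef s w) n j z))\<^sup>2) \<and>
   A * C * (\<Sum>k<n. (cmod (z k))\<^sup>2) \<le> (\<Sum>j. (cmod (row_apply (coef s w) n j z))\<^sup>2)"
proof -
  have "A * C * (\<Sum>k<n. (cmod (z k))\<^sup>2) \<le> A * (l2_norm (synthesis w n z))\<^sup>2"
    using riesz_basis_synthesis_bounds[OF riesz, where n = n and z = z] frame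
    by (simp add: is_frame_def mult.assoc)
  then show ?thesis
    using frame_bounds_synthesis[of n z] unfolding row_apply_coef by linarith
qed

lemma coef_column_bounds:
  "summable (\<lambda>j. (cmod (coef s w j k))\<^sup>2) \<and>
   A * C \<le> (\<Sum>j. (cmod (coef s w j k))\<^sup>2) \<and> (\<Sum>j. (cmod (coef s w j k))\<^sup>2) \<le> B * D"
proof -
  let ?e = "\<lambda>i. if i = k then (1::complex) else 0"
  have unit: "(\<Sum>i<Suc k. (cmod (?e i))\<^sup>2) = 1"
    by (simp add: if_distrib cong: if_cong)
  have "C \<le> (l2_norm (w k))\<^sup>2" "(l2_norm (w k))\<^sup>2 \<le> D"
    using riesz_basis_synthesis_bounds[OF riesz, where n = "Suc k" and z = ?e]
    by (simp_all add: unit synthesis_unit)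
  moreover have "0 < A" "A \<le> B" using frame by (auto simp: is_frame_def)
  ultimately have "A * C \<le> A * (l2_norm (w k))\<^sup>2" "B * (l2_norm (w k))\<^sup>2 \<le> B * D"
    by simp_all
  then show ?thesis
    using frame_bounds_synthesis[of "Suc k" ?e] unfolding synthesis_unit coef_def by linarith
qed

lemma v_vec_index: "k < n \<Longrightarrow> v_vec s w n j $ k = cnj (coef s w j k)"
proof -
  assume k: "k < n"
  have "v_vec s w n j $ k = (\<Sum>i. e_seq j i * l2_inner (s i) (w k))"
    using k by (simp add: v_vec_def iota_U_adj_def)
  also have "\<dots> = (\<Sum>i. if i = j then l2_inner (s i) (w k) else 0)"
    by (rule suminf_cong) (simp add: e_seq_def)
  also have "\<dots> = l2_inner (s j) (w k)"
    by (subst suminf_finite[of "{j}"]) auto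
  finally show ?thesis by (simp add: l2_inner_frame_coef)
qed

lemma Sigma_mat_diag:
  assumes "k < n"
  shows "Sigma_mat s w n $$ (k, k) = complex_of_real (\<Sum>j. (cmod (coef s w j k))\<^sup>2)"
proof -
  have "Sigma_mat s w n $$ (k, k) = (\<Sum>j. complex_of_real ((cmod (coef s w j k))\<^sup>2))"
    using assms by (simp add: Sigma_mat_def iota_U_adj_def U_iota_unit_vec l2_inner_frame_coef
        mult_cnj_self)
  also have "\<dots> = complex_of_real (\<Sum>j. (cmod (coef s w j k))\<^sup>2)"
    using coef_column_bounds[of k] by (simp add: suminf_of_real)
  finally show ?thesis .
qed

lemma trace_Sigma_mat:
  "Re (mat_trace (Sigma_mat s w n)) = (\<Sum>k<n. \<Sum>j. (cmod (coef s w j k))\<^sup>2)"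
proof -
  have "mat_trace (Sigma_mat s w n) = (\<Sum>k<n. Sigma_mat s w n $$ (k, k))"
    by (simp add: mat_trace_def Sigma_mat_def)
  also have "\<dots> = (\<Sum>k<n. complex_of_real (\<Sum>j. (cmod (coef s w j k))\<^sup>2))"
    by (rule sum.cong) (auto simp: Sigma_mat_diag)
  finally show ?thesis by simp
qed

lemma trace_Sigma_mat_bounds:
  "real n * (A * C) \<le> Re (mat_trace (Sigma_mat s w n))"
  "Re (mat_trace (Sigma_mat s w n)) \<le> real n * (B * D)"
  using sum_mono[of "{..<n}" "\<lambda>_. A * C" "\<lambda>k. \<Sum>j. (cmod (coef s w j k))\<^sup>2"]
    sum_mono[of "{..<n}" "\<lambda>k. \<Sum>j. (cmod (coef s w j k))\<^sup>2" "\<lambda>_. B * D"] coef_column_bounds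
  unfolding trace_Sigma_mat by auto

lemma leverage_eq:
  "leverage s w n j = (\<Sum>k<n. (cmod (coef s w j k))\<^sup>2) / Re (mat_trace (Sigma_mat s w n))"
proof -
  have "(cvec_norm (v_vec s w n j))\<^sup>2 = (\<Sum>k<n. (cmod (v_vec s w n j $ k))\<^sup>2)"
    by (simp add: cvec_norm_def v_vec_def iota_U_adj_def sum_nonneg)
  also have "\<dots> = (\<Sum>k<n. (cmod (coef s w j k))\<^sup>2)"
    by (simp add: v_vec_index)
  finally show ?thesis by (simp add: leverage_def)
qed

lemma AC_le_trace: "1 \<le> n \<Longrightarrow> A * C \<le> Re (mat_trace (Sigma_mat s w n))"
  using trace_Sigma_mat_bounds(1)[of n] AC_pos mult_le_cancel_right1[of "A * C" "real n"] by simp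

lemma leverage_row_sampling:
  assumes "1 \<le> n"
  shows "row_sampling (coef s w) n (A * C) (Re (mat_trace (Sigma_mat s w n))) (leverage s w n)"
proof
  let ?T = "Re (mat_trace (Sigma_mat s w n))"
  show T: "0 < ?T" using AC_le_trace[OF assms] AC_pos by linarith
  have column: "summable (\<lambda>j. (cmod (coef s w j k))\<^sup>2)" for k
    using coef_column_bounds by blast
  have "(\<lambda>j. \<Sum>k<n. (cmod (coef s w j k))\<^sup>2) sums ?T"
    unfolding trace_Sigma_mat using column
    by (simp add: sums_iff summable_sum suminf_sum)
  then show "leverage s w n sums 1"
    using sums_divide[of _ ?T ?T] T by (simp add: leverage_eq[abs_def])
qed (use coef_rows_lower_bound leverage_eq in auto)

end

section \<open>Weighted least squares on the sampled rows\<close>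

lemma suminf_Q_op:
  "(\<Sum>j. Q_op p m \<omega> y j * g j)
     = (1 / of_nat m) * (\<Sum>t<m. y (\<omega> t) / complex_of_real (p (\<omega> t)) * g (\<omega> t))"
proof -
  let ?I = "\<omega> ` {..<m}"
  let ?term = "\<lambda>j t. if \<omega> t = j then y j / complex_of_real (p j) * g j else 0"
  have "Q_op p m \<omega> y j * g j = (1 / of_nat m) * (\<Sum>t<m. ?term j t)" for j
  proof -
    have "(\<Sum>t<m. (if \<omega> t = j then y j / complex_of_real (p j) else 0) * g j) = (\<Sum>t<m. ?term j t)"
      by (rule sum.cong) auto
    then show ?thesis unfolding Q_op_def by (simp only: mult.assoc sum_distrib_right)
  qed
  moreover have "Q_op p m \<omega> y j = 0" if "j \<notin> ?I" for j
    unfolding Q_op_def using that by (force intro!: sum.neutral)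
  ultimately have "(\<Sum>j. Q_op p m \<omega> y j * g j) = (\<Sum>j\<in>?I. (1 / of_nat m) * (\<Sum>t<m. ?term j t))"
    by (subst suminf_finite[of ?I]) auto
  also have "\<dots> = (1 / of_nat m) * (\<Sum>t<m. \<Sum>j\<in>?I. ?term j t)"
    by (simp only: sum_distrib_left[symmetric] sum.swap[of _ ?I])
  also have "(\<Sum>t<m. \<Sum>j\<in>?I. ?term j t) = (\<Sum>t<m. y (\<omega> t) / complex_of_real (p (\<omega> t)) * g (\<omega> t))"
    by (rule sum.cong) (simp_all add: sum.delta)
  finally show ?thesis .
qed

lemma weighted_sum_squares_eq_0:
  fixes c :: "nat \<Rightarrow> complex" and q :: "nat \<Rightarrow> real"
  assumes sum_le: "(\<Sum>t<m. (cmod (c t))\<^sup>2 / q t) \<le> 0" and q_nonneg: "\<And>t. 0 \<le> q t"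
    and q_zero: "\<And>t. t < m \<Longrightarrow> q t = 0 \<Longrightarrow> c t = 0" and t: "t < m"
  shows "c t = 0"
proof (cases "q t = 0")
  case False
  have nonneg: "0 \<le> (cmod (c t))\<^sup>2 / q t" for t using q_nonneg[of t] by simp
  then have "(\<Sum>t<m. (cmod (c t))\<^sup>2 / q t) = 0" using sum_le by (meson order_antisym sum_nonneg)
  then have "(cmod (c t))\<^sup>2 / q t = 0"
    using sum_nonneg_eq_0_iff[of "{..<m}" "\<lambda>t. (cmod (c t))\<^sup>2 / q t"] nonneg t by simp
  then show ?thesis using False by simp
qed (use q_zero t in blast)

lemma cmod_add_square_divide:
  fixes q :: real
  shows "(cmod (e + c))\<^sup>2 / q = (cmod e)\<^sup>2 / q + (cmod c)\<^sup>2 / q + 2 * Re (e / complex_of_real q * cnj c)"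
proof -
  have "(cmod (e + c))\<^sup>2 = (cmod e)\<^sup>2 + (cmod c)\<^sup>2 + 2 * Re (e * cnj c)"
    unfolding cmod_power2 by (simp add: power2_eq_square algebra_simps)
  moreover have "Re (e / complex_of_real q * cnj c) = Re (e * cnj c) / q"
    by (simp add: Re_divide_of_real)
  ultimately show ?thesis by (simp add: add_divide_distrib)
qed

locale sampled_least_squares =
  fixes s w :: "nat \<Rightarrow> seq" and C D :: real and p :: "nat \<Rightarrow> real"
    and m n :: nat and \<omega> :: "nat \<Rightarrow> nat"
  assumes s_l2: "\<And>j. s j \<in> l2" and riesz: "is_riesz_basis w C D"
    and m_pos: "0 < m" and p_nonneg: "\<And>j. 0 \<le> p j"
    and coef_vanishes: "\<And>j k. p j = 0 \<Longrightarrow> k < n \<Longrightarrow> coef s w j k = 0"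
begin

abbreviation "Shat \<equiv> Sigma_hat s w n p m \<omega>"
abbreviation "Ghat \<equiv> Gamma_hat s w n p m \<omega>"
abbreviation "correction h \<equiv> mat_inv Shat *\<^sub>v Ghat h"
abbreviation "fit t x \<equiv> row_apply (coef s w) n (\<omega> t) (\<lambda>l. x $ l)"

lemma l2_inner_synthesis_sample: "l2_inner (synthesis w n z) (s j) = row_apply (coef s w) n j z"
  unfolding l2_inner_synthesis_left[OF riesz s_l2] row_apply_def coef_def by (simp add: ac_simps)

lemma l2_inner_W_iota: "l2_inner (W_iota w n x) (s j) = row_apply (coef s w) n j (\<lambda>l. x $ l)"
  unfolding W_iota_eq_synthesis by (rule l2_inner_synthesis_sample)

lemma fit_diff:
  assumes "x \<in> carrier_vec n" "y \<in> carrier_vec n"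
  shows "fit t (x - y) = fit t x - fit t y"
proof -
  have "fit t (x - y) = row_apply (coef s w) n (\<omega> t) (\<lambda>l. x $ l - y $ l)"
    by (rule row_apply_cong) (use assms in simp)
  then show ?thesis by (simp add: row_apply_diff)
qed

lemma fit_vanishes: "p (\<omega> t) = 0 \<Longrightarrow> row_apply (coef s w) n (\<omega> t) z = 0"
  unfolding row_apply_def using coef_vanishes by simp

lemma iota_U_adj_Q_op_index:
  "k < n \<Longrightarrow> iota_U_adj s w n (Q_op p m \<omega> y) $ k
     = (1 / of_nat m) * (\<Sum>t<m. y (\<omega> t) / complex_of_real (p (\<omega> t)) * cnj (coef s w (\<omega> t) k))"
  by (simp add: iota_U_adj_def suminf_Q_op coef_def
      l2_inner_commute[OF riesz_basis_l2[OF riesz] s_l2, symmetric])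

lemma Sigma_hat_carrier: "Shat \<in> carrier_mat n n"
  by (simp add: Sigma_hat_def)

lemma Gamma_hat_carrier: "Ghat h \<in> carrier_vec n"
  by (simp add: Gamma_hat_def iota_U_adj_def)

lemma Gamma_hat_index:
  "k < n \<Longrightarrow> Ghat h $ k = (1 / of_nat m) *
     (\<Sum>t<m. l2_inner (P_perp w n h) (s (\<omega> t)) / complex_of_real (p (\<omega> t)) * cnj (coef s w (\<omega> t) k))"
  by (simp add: Gamma_hat_def iota_U_adj_Q_op_index analysis_op_def)

lemma Sigma_hat_mult_vec_index:
  assumes x: "x \<in> carrier_vec n" and k: "k < n"
  shows "(Shat *\<^sub>v x) $ k
           = (1 / of_nat m) * (\<Sum>t<m. fit t x / complex_of_real (p (\<omega> t)) * cnj (coef s w (\<omega> t) k))"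
proof -
  have "(Shat *\<^sub>v x) $ k = (\<Sum>l<n. Shat $$ (k, l) * x $ l)"
    by (rule mult_mat_vec_index_sum[OF Sigma_hat_carrier x k])
  also have "\<dots> = (1 / of_nat m) * (\<Sum>l<n. \<Sum>t<m.
      coef s w (\<omega> t) l * x $ l / complex_of_real (p (\<omega> t)) * cnj (coef s w (\<omega> t) k))"
    using k by (simp add: Sigma_hat_def iota_U_adj_Q_op_index U_iota_unit_vec
        sum_distrib_left sum_distrib_right ac_simps)
  also have "\<dots> = (1 / of_nat m) * (\<Sum>t<m. fit t x / complex_of_real (p (\<omega> t)) * cnj (coef s w (\<omega> t) k))"
    unfolding row_apply_def by (simp add: sum.swap[of _ "{..<n}"] sum_distrib_right sum_divide_distrib)
  finally show ?thesis .
qed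

lemma Sigma_hat_quadratic_form:
  assumes x: "x \<in> carrier_vec n"
  shows "(\<Sum>k<n. cnj (x $ k) * (Shat *\<^sub>v x) $ k)
           = (1 / of_nat m) * complex_of_real (\<Sum>t<m. (cmod (fit t x))\<^sup>2 / p (\<omega> t))"
proof -
  let ?w = "\<lambda>t. complex_of_real (p (\<omega> t))"
  have "(\<Sum>k<n. cnj (x $ k) * (Shat *\<^sub>v x) $ k)
      = (1 / of_nat m) * (\<Sum>k<n. \<Sum>t<m. fit t x / ?w t * cnj (coef s w (\<omega> t) k * x $ k))"
    by (simp add: Sigma_hat_mult_vec_index[OF x] sum_distrib_left ac_simps)
  also have "(\<Sum>k<n. \<Sum>t<m. fit t x / ?w t * cnj (coef s w (\<omega> t) k * x $ k))
      = (\<Sum>t<m. \<Sum>k<n. fit t x / ?w t * cnj (coef s w (\<omega> t) k * x $ k))"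
    by (rule sum.swap)
  also have "\<dots> = (\<Sum>t<m. fit t x / ?w t * cnj (fit t x))"
    unfolding row_apply_def by (simp add: sum_distrib_left)
  also have "\<dots> = complex_of_real (\<Sum>t<m. (cmod (fit t x))\<^sup>2 / p (\<omega> t))"
    by (simp add: mult_cnj_self)
  finally show ?thesis .
qed

lemma Gamma_hat_cmod_le:
  assumes h: "h \<in> l2" "l2_norm h \<le> 1" and k: "k < n"
  shows "cmod (Ghat h $ k) \<le>
     (1 / real m) * (\<Sum>t<m. ((1 + (l2_norm (s (\<omega> t)))\<^sup>2) / 2 / p (\<omega> t)) * cmod (coef s w (\<omega> t) k))"
proof -
  have Ph: "P_perp w n h \<in> l2" by (rule P_perp_l2[OF riesz h(1)])
  have "l2_norm (P_perp w n h) \<le> 1" using P_perp_norm_le[OF riesz h(1), of n] h(2) by linarith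
  then have "(l2_norm (P_perp w n h))\<^sup>2 \<le> 1" by (simp add: power_le_one l2_norm_nonneg[OF Ph])
  then have inner: "cmod (l2_inner (P_perp w n h) (s (\<omega> t))) \<le> (1 + (l2_norm (s (\<omega> t)))\<^sup>2) / 2" for t
    using l2_inner_le[OF Ph s_l2, of "\<omega> t"] by (simp add: divide_right_mono add_right_mono order_trans)
  have "cmod (Ghat h $ k) = (1 / real m) * cmod (\<Sum>t<m. l2_inner (P_perp w n h) (s (\<omega> t))
          / complex_of_real (p (\<omega> t)) * cnj (coef s w (\<omega> t) k))"
    unfolding Gamma_hat_index[OF k] by (simp add: norm_mult norm_divide)
  also have "\<dots> \<le> (1 / real m) * (\<Sum>t<m. cmod (l2_inner (P_perp w n h) (s (\<omega> t))
          / complex_of_real (p (\<omega> t)) * cnj (coef s w (\<omega> t) k)))"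
    by (intro mult_left_mono norm_sum) simp
  also have "\<dots> \<le> (1 / real m) * (\<Sum>t<m. ((1 + (l2_norm (s (\<omega> t)))\<^sup>2) / 2 / p (\<omega> t)) * cmod (coef s w (\<omega> t) k))"
  proof (intro mult_left_mono sum_mono)
    fix t
    have "cmod (l2_inner (P_perp w n h) (s (\<omega> t)) / complex_of_real (p (\<omega> t)) * cnj (coef s w (\<omega> t) k))
        = cmod (l2_inner (P_perp w n h) (s (\<omega> t))) / p (\<omega> t) * cmod (coef s w (\<omega> t) k)"
      using p_nonneg[of "\<omega> t"] by (simp add: norm_mult norm_divide)
    also have "\<dots> \<le> ((1 + (l2_norm (s (\<omega> t)))\<^sup>2) / 2 / p (\<omega> t)) * cmod (coef s w (\<omega> t) k)"
      by (intro mult_right_mono divide_right_mono inner p_nonneg) simp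
    finally show "cmod (l2_inner (P_perp w n h) (s (\<omega> t)) / complex_of_real (p (\<omega> t))
        * cnj (coef s w (\<omega> t) k)) \<le> ((1 + (l2_norm (s (\<omega> t)))\<^sup>2) / 2 / p (\<omega> t)) * cmod (coef s w (\<omega> t) k)" .
  qed simp
  finally show ?thesis .
qed

lemma W_iota_mult_Gamma_hat_bdd:
  assumes M: "M \<in> carrier_mat n n"
  shows "bdd_above {l2_norm (W_iota w n (M *\<^sub>v Ghat h)) | h. h \<in> l2 \<and> l2_norm h \<le> 1}"
proof -
  define \<gamma> where "\<gamma> l = (1 / real m) *
    (\<Sum>t<m. ((1 + (l2_norm (s (\<omega> t)))\<^sup>2) / 2 / p (\<omega> t)) * cmod (coef s w (\<omega> t) l))" for l
  define \<mu> where "\<mu> k = (\<Sum>l<n. cmod (M $$ (k, l)) * \<gamma> l)" for k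
  have D: "0 \<le> D" using riesz by (simp add: is_riesz_basis_def)
  have "l2_norm (W_iota w n (M *\<^sub>v Ghat h)) \<le> sqrt (D * (\<Sum>k<n. (\<mu> k)\<^sup>2))"
    if h: "h \<in> l2" "l2_norm h \<le> 1" for h
  proof -
    let ?u = "M *\<^sub>v Ghat h"
    have "cmod (?u $ k) \<le> \<mu> k" if k: "k < n" for k
    proof -
      have "cmod (?u $ k) \<le> (\<Sum>l<n. cmod (M $$ (k, l) * Ghat h $ l))"
        unfolding mult_mat_vec_index_sum[OF M Gamma_hat_carrier k] by (rule norm_sum)
      also have "\<dots> \<le> \<mu> k"
        unfolding \<mu>_def
      proof (rule sum_mono)
        fix l assume "l \<in> {..<n}"
        then have "cmod (Ghat h $ l) \<le> \<gamma> l" unfolding \<gamma>_def by (intro Gamma_hat_cmod_le[OF h]) simp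
        then show "cmod (M $$ (k, l) * Ghat h $ l) \<le> cmod (M $$ (k, l)) * \<gamma> l"
          by (simp add: norm_mult mult_left_mono)
      qed
      finally show ?thesis .
    qed
    then have "(\<Sum>k<n. (cmod (?u $ k))\<^sup>2) \<le> (\<Sum>k<n. (\<mu> k)\<^sup>2)"
      by (intro sum_mono power_mono) auto
    then have "(l2_norm (W_iota w n ?u))\<^sup>2 \<le> D * (\<Sum>k<n. (\<mu> k)\<^sup>2)"
      using riesz_basis_synthesis_bounds[OF riesz, where n = n and z = "\<lambda>k. ?u $ k"] D
      unfolding W_iota_eq_synthesis by (meson mult_left_mono order_trans)
    then show ?thesis by (rule real_le_rsqrt)
  qed
  then show ?thesis by (intro bdd_aboveI[of _ "sqrt (D * (\<Sum>k<n. (\<mu> k)\<^sup>2))"]) blast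
qed

end

locale determined_least_squares = sampled_least_squares +
  assumes sampled_rows_determine:
    "\<And>z. \<forall>t<m. row_apply (coef s w) n (\<omega> t) z = 0 \<Longrightarrow> \<forall>k<n. z k = 0"
begin

lemma Sigma_hat_invertible: "invertible_mat Shat"
proof (rule invertible_mat_if_trivial_kernel[OF Sigma_hat_carrier])
  fix x assume x: "x \<in> carrier_vec n" and Sx: "Shat *\<^sub>v x = 0\<^sub>v n"
  define R where "R = (\<Sum>t<m. (cmod (fit t x))\<^sup>2 / p (\<omega> t))"
  have "(1 / of_nat m) * complex_of_real R = 0"
    using Sigma_hat_quadratic_form[OF x] Sx unfolding R_def[symmetric] by simp
  then have "R = 0" using m_pos by simp
  then have "(\<Sum>t<m. (cmod (fit t x))\<^sup>2 / p (\<omega> t)) \<le> 0" by (simp add: R_def)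
  then have "\<forall>t<m. fit t x = 0"
    using weighted_sum_squares_eq_0[where q = "\<lambda>t. p (\<omega> t)" and c = "\<lambda>t. fit t x"]
      p_nonneg fit_vanishes by blast
  then show "x = 0\<^sub>v n" using sampled_rows_determine x by (intro eq_vecI) auto
qed

lemma correction_carrier: "correction h \<in> carrier_vec n"
  using mat_inv_right(1)[OF Sigma_hat_carrier Sigma_hat_invertible] Gamma_hat_carrier by simp

lemma Sigma_hat_correction: "Shat *\<^sub>v correction h = Ghat h"
  using assoc_mult_mat_vec[OF Sigma_hat_carrier mat_inv_right(1)[OF Sigma_hat_carrier Sigma_hat_invertible]
      Gamma_hat_carrier, symmetric]
    mat_inv_right(2)[OF Sigma_hat_carrier Sigma_hat_invertible] Gamma_hat_carrier
  by simp

lemma normal_equations: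
  assumes z: "z \<in> carrier_vec n"
  shows "(\<Sum>t<m. (fit t (correction h) - l2_inner (P_perp w n h) (s (\<omega> t)))
            / complex_of_real (p (\<omega> t)) * cnj (fit t z)) = 0"
proof -
  let ?e = "\<lambda>t. (fit t (correction h) - l2_inner (P_perp w n h) (s (\<omega> t))) / complex_of_real (p (\<omega> t))"
  have "(\<Sum>t<m. ?e t * cnj (coef s w (\<omega> t) k)) = 0" if k: "k < n" for k
  proof -
    have "(1 / of_nat m) * (\<Sum>t<m. fit t (correction h) / complex_of_real (p (\<omega> t)) * cnj (coef s w (\<omega> t) k))
        = (1 / of_nat m) * (\<Sum>t<m. l2_inner (P_perp w n h) (s (\<omega> t)) / complex_of_real (p (\<omega> t))
            * cnj (coef s w (\<omega> t) k))"
      using arg_cong[OF Sigma_hat_correction, of "\<lambda>v. v $ k", of h]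
      unfolding Sigma_hat_mult_vec_index[OF correction_carrier k] Gamma_hat_index[OF k] .
    then show ?thesis
      using m_pos by (simp add: diff_divide_distrib left_diff_distrib sum_subtractf)
  qed
  then have "(\<Sum>k<n. cnj (z $ k) * (\<Sum>t<m. ?e t * cnj (coef s w (\<omega> t) k))) = 0" by simp
  moreover have "(\<Sum>t<m. ?e t * cnj (fit t z))
      = (\<Sum>t<m. \<Sum>k<n. cnj (z $ k) * (?e t * cnj (coef s w (\<omega> t) k)))"
    unfolding row_apply_def by (simp add: sum_distrib_left sum_distrib_right sum_divide_distrib ac_simps)
  moreover have "\<dots> = (\<Sum>k<n. cnj (z $ k) * (\<Sum>t<m. ?e t * cnj (coef s w (\<omega> t) k)))"
    by (subst sum.swap) (simp add: sum_distrib_left)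
  ultimately show ?thesis by simp
qed

lemma least_squares_expand:
  assumes f: "f \<in> l2" and y: "\<And>j. f j - P_perp w n f j = synthesis w n y j"
    and x: "x \<in> carrier_vec n"
  defines "x\<^sub>0 \<equiv> vec n y + correction f"
  shows "LS_obj s w n p m \<omega> f x
           = LS_obj s w n p m \<omega> f x\<^sub>0 + (\<Sum>t<m. (cmod (fit t (x - x\<^sub>0)))\<^sup>2 / p (\<omega> t))"
proof -
  have x\<^sub>0: "x\<^sub>0 \<in> carrier_vec n" using correction_carrier by (simp add: x\<^sub>0_def)
  define e where "e t = fit t (correction f) - l2_inner (P_perp w n f) (s (\<omega> t))" for t
  have f_split: "f = (\<lambda>j. P_perp w n f j + synthesis w n y j)"
    using y by (metis add.commute diff_eq_eq)
  have "l2_inner f (s (\<omega> t)) = l2_inner (P_perp w n f) (s (\<omega> t)) + row_apply (coef s w) n (\<omega> t) y" for t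
    using l2_inner_add_left[OF P_perp_l2[OF riesz f] synthesis_l2[OF riesz] s_l2]
    by (subst f_split) (simp add: l2_inner_synthesis_sample)
  moreover have "fit t x\<^sub>0 = row_apply (coef s w) n (\<omega> t) y + fit t (correction f)" for t
  proof -
    have "fit t x\<^sub>0 = row_apply (coef s w) n (\<omega> t) (\<lambda>l. y l + correction f $ l)"
      by (rule row_apply_cong) (use carrier_vecD[OF correction_carrier] in \<open>simp add: x\<^sub>0_def\<close>)
    then show ?thesis by (simp add: row_apply_add)
  qed
  ultimately have residual\<^sub>0: "fit t x\<^sub>0 - l2_inner f (s (\<omega> t)) = e t" for t
    by (simp add: e_def)
  then have residual: "fit t x - l2_inner f (s (\<omega> t)) = e t + fit t (x - x\<^sub>0)" for t
    using fit_diff[OF x x\<^sub>0] by (simp add: algebra_simps)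
  have "LS_obj s w n p m \<omega> f x = (\<Sum>t<m. (cmod (e t + fit t (x - x\<^sub>0)))\<^sup>2 / p (\<omega> t))"
    unfolding LS_obj_def l2_inner_W_iota residual ..
  also have "\<dots> = (\<Sum>t<m. (cmod (e t))\<^sup>2 / p (\<omega> t)) + (\<Sum>t<m. (cmod (fit t (x - x\<^sub>0)))\<^sup>2 / p (\<omega> t))
                   + 2 * Re (\<Sum>t<m. e t / complex_of_real (p (\<omega> t)) * cnj (fit t (x - x\<^sub>0)))"
    by (simp add: cmod_add_square_divide sum.distrib sum_distrib_left Re_sum)
  also have "(\<Sum>t<m. e t / complex_of_real (p (\<omega> t)) * cnj (fit t (x - x\<^sub>0))) = 0"
    unfolding e_def by (rule normal_equations) (use x x\<^sub>0 in simp)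
  also have "(\<Sum>t<m. (cmod (e t))\<^sup>2 / p (\<omega> t)) = LS_obj s w n p m \<omega> f x\<^sub>0"
    unfolding LS_obj_def l2_inner_W_iota residual\<^sub>0 ..
  finally show ?thesis by simp
qed

end


lemma (in sampled_least_squares) W_iota_smult:
  "u \<in> carrier_vec n \<Longrightarrow> W_iota w n (c \<cdot>\<^sub>v u) = (\<lambda>j. c * W_iota w n u j)"
  unfolding W_iota_def by (auto simp: sum_distrib_left mult.assoc)

lemma (in sampled_least_squares) Gamma_hat_scale_P_perp:
  assumes h: "h \<in> l2"
  shows "Ghat (\<lambda>j. c * P_perp w n h j) = c \<cdot>\<^sub>v Ghat h"
proof (rule eq_vecI)
  have "P_perp w n (\<lambda>j. c * P_perp w n h j) = (\<lambda>j. c * P_perp w n h j)"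
    by (intro P_perp_id[OF riesz] orth_compl_W_sub_scale[OF riesz] P_perp_orth_compl[OF riesz h])
  moreover have "l2_inner (\<lambda>j. c * P_perp w n h j) (s i) = c * l2_inner (P_perp w n h) (s i)" for i
    by (rule l2_inner_scale_left[OF P_perp_l2[OF riesz h] s_l2])
  ultimately show "Ghat (\<lambda>j. c * P_perp w n h j) $ k = (c \<cdot>\<^sub>v Ghat h) $ k"
    if "k < dim_vec (c \<cdot>\<^sub>v Ghat h)" for k
    using that Gamma_hat_carrier[of h] by (simp add: Gamma_hat_index sum_distrib_left ac_simps)
qed (simp add: Gamma_hat_def iota_U_adj_def)

context determined_least_squares
begin

lemma W_iota_correction_le:
  assumes f: "f \<in> l2"
  shows "l2_norm (W_iota w n (correction f)) \<le> K_const s w n p m \<omega> * l2_norm (P_perp w n f)"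
proof -
  let ?P = "P_perp w n f"
  have P: "?P \<in> l2" by (rule P_perp_l2[OF riesz f])
  have inv: "mat_inv Shat \<in> carrier_mat n n"
    by (rule mat_inv_right(1)[OF Sigma_hat_carrier Sigma_hat_invertible])
  show ?thesis
  proof (cases "l2_norm ?P = 0")
    case True
    then have "P_perp w n f = (\<lambda>j. 0)" using l2_norm_eq_0_imp[OF P] by auto
    then have "Ghat f = 0\<^sub>v n"
      using Gamma_hat_carrier[of f] by (intro eq_vecI) (simp_all add: Gamma_hat_index)
    then have "W_iota w n (correction f) = (\<lambda>j. 0)"
      using inv by (simp add: W_iota_def)
    then show ?thesis using True by simp
  next
    case False
    define N where "N = l2_norm ?P"
    have N: "0 < N" using False l2_norm_nonneg[OF P] by (simp add: N_def)
    define h where "h = (\<lambda>j. complex_of_real (1 / N) * ?P j)"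
    have h_l2: "h \<in> l2" unfolding h_def by (rule l2_scale[OF P])
    have h_norm: "l2_norm h = 1"
      unfolding h_def l2_norm_scale[OF P] N_def[symmetric] using N by (simp add: norm_divide)
    have "W_iota w n (correction h) = (\<lambda>j. complex_of_real (1 / N) * W_iota w n (correction f) j)"
      unfolding h_def Gamma_hat_scale_P_perp[OF f] mult_mat_vec[OF inv Gamma_hat_carrier]
      using inv Gamma_hat_carrier by (intro W_iota_smult) simp
    then have "l2_norm (W_iota w n (correction h))
        = cmod (complex_of_real (1 / N)) * l2_norm (W_iota w n (correction f))"
      by (simp only: W_iota_eq_synthesis l2_norm_scale[OF synthesis_l2[OF riesz]])
    then have "l2_norm (W_iota w n (correction h)) = l2_norm (W_iota w n (correction f)) / N"
      using N by (simp add: norm_divide)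
    moreover have "l2_norm (W_iota w n (correction h)) \<le> K_const s w n p m \<omega>"
      unfolding K_const_def l2_opnorm_def
      by (rule cSup_upper) (use h_l2 h_norm W_iota_mult_Gamma_hat_bdd[OF inv] in auto)
    ultimately show ?thesis using N by (simp add: N_def pos_divide_le_eq mult.commute)
  qed
qed

lemma is_LS_minimizer_iff:
  assumes f: "f \<in> l2" and y: "\<And>j. f j - P_perp w n f j = synthesis w n y j"
  shows "is_LS_minimizer s w n p m \<omega> f x \<longleftrightarrow> x = vec n y + correction f"
proof -
  define x\<^sub>0 where "x\<^sub>0 = vec n y + correction f"
  have x\<^sub>0: "x\<^sub>0 \<in> carrier_vec n" using correction_carrier by (simp add: x\<^sub>0_def)
  have nonneg: "0 \<le> (\<Sum>t<m. (cmod (fit t z))\<^sup>2 / p (\<omega> t))" for z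
    using p_nonneg by (intro sum_nonneg) simp
  have "x = x\<^sub>0" if x: "is_LS_minimizer s w n p m \<omega> f x"
  proof -
    have xc: "x \<in> carrier_vec n"
      and "LS_obj s w n p m \<omega> f x \<le> LS_obj s w n p m \<omega> f x\<^sub>0"
      using x x\<^sub>0 unfolding is_LS_minimizer_def by auto
    then have "(\<Sum>t<m. (cmod (fit t (x - x\<^sub>0)))\<^sup>2 / p (\<omega> t)) \<le> 0"
      using least_squares_expand[OF f y xc] by (simp add: x\<^sub>0_def)
    then have "\<forall>t<m. fit t (x - x\<^sub>0) = 0"
      using weighted_sum_squares_eq_0[where q = "\<lambda>t. p (\<omega> t)" and c = "\<lambda>t. fit t (x - x\<^sub>0)"]
        p_nonneg fit_vanishes by blast
    then have "\<forall>k<n. (x - x\<^sub>0) $ k = 0"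
      using sampled_rows_determine[of "\<lambda>l. (x - x\<^sub>0) $ l"] by blast
    then show ?thesis using xc x\<^sub>0 by (intro eq_vecI) auto
  qed
  moreover have "is_LS_minimizer s w n p m \<omega> f x\<^sub>0"
    unfolding is_LS_minimizer_def
  proof (intro conjI ballI)
    fix z :: "complex vec" assume z: "z \<in> carrier_vec n"
    have "LS_obj s w n p m \<omega> f z
        = LS_obj s w n p m \<omega> f x\<^sub>0 + (\<Sum>t<m. (cmod (fit t (z - x\<^sub>0)))\<^sup>2 / p (\<omega> t))"
      unfolding x\<^sub>0_def by (rule least_squares_expand[OF f y z])
    then show "LS_obj s w n p m \<omega> f x\<^sub>0 \<le> LS_obj s w n p m \<omega> f z"
      using nonneg[of "z - x\<^sub>0"] by linarith
  qed (rule x\<^sub>0)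
  ultimately show ?thesis unfolding x\<^sub>0_def by blast
qed

lemma least_squares_error:
  assumes f: "f \<in> l2" and y: "\<And>j. f j - P_perp w n f j = synthesis w n y j"
  shows "l2_norm (\<lambda>j. f j - W_iota w n (vec n y + correction f) j)
           \<le> l2_norm (P_perp w n f) * sqrt (1 + (K_const s w n p m \<omega>)\<^sup>2)"
proof -
  let ?P = "P_perp w n f" and ?K = "K_const s w n p m \<omega>"
  let ?c = "W_iota w n (correction f)" and ?u = "synthesis w n (\<lambda>k. - correction f $ k)"
  have P: "?P \<in> l2" by (rule P_perp_l2[OF riesz f])
  have c: "?c \<in> l2" unfolding W_iota_eq_synthesis by (rule synthesis_l2[OF riesz])
  have u: "?u = (\<lambda>j. - ?c j)"
    by (simp add: W_iota_def synthesis_def sum_negf)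
  have split: "(\<lambda>j. f j - W_iota w n (vec n y + correction f) j) = (\<lambda>j. ?P j + ?u j)"
  proof
    fix j
    have "W_iota w n (vec n y + correction f) j = (\<Sum>k<n. y k * w k j + correction f $ k * w k j)"
      unfolding W_iota_def
      by (rule sum.cong) (use carrier_vecD[OF correction_carrier] in \<open>simp_all add: distrib_right\<close>)
    then have "W_iota w n (vec n y + correction f) j = synthesis w n y j + ?c j"
      by (simp add: W_iota_def synthesis_def sum.distrib)
    then show "f j - W_iota w n (vec n y + correction f) j = ?P j + ?u j"
      using y[of j] u by (simp add: algebra_simps)
  qed
  have "l2_norm ?u = l2_norm ?c" unfolding u by (rule l2_norm_uminus)
  moreover have "(l2_norm (\<lambda>j. ?P j + ?u j))\<^sup>2 = (l2_norm ?P)\<^sup>2 + (l2_norm ?u)\<^sup>2"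
    by (rule l2_pythagoras[OF P synthesis_l2[OF riesz]
          orth_compl_W_sub_synthesis(2)[OF riesz P_perp_orth_compl[OF riesz f]]])
  ultimately have "(l2_norm (\<lambda>j. f j - W_iota w n (vec n y + correction f) j))\<^sup>2
      = (l2_norm ?P)\<^sup>2 + (l2_norm ?c)\<^sup>2"
    unfolding split by simp
  also have "\<dots> \<le> (l2_norm ?P)\<^sup>2 * (1 + ?K\<^sup>2)"
    using power_mono[OF W_iota_correction_le[OF f] l2_norm_nonneg[OF c], of 2]
    by (simp add: power_mult_distrib algebra_simps)
  finally have "l2_norm (\<lambda>j. f j - W_iota w n (vec n y + correction f) j)
      \<le> sqrt ((l2_norm ?P)\<^sup>2 * (1 + ?K\<^sup>2))"
    by (rule real_le_rsqrt)
  then show ?thesis using l2_norm_nonneg[OF P] by (simp add: real_sqrt_mult)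
qed

lemma least_squares_solution:
  assumes f: "f \<in> l2"
  shows "(\<exists>!x. is_LS_minimizer s w n p m \<omega> f x) \<and>
         (\<forall>x. is_LS_minimizer s w n p m \<omega> f x \<longrightarrow>
            l2_norm (\<lambda>j. f j - W_iota w n x j) \<le> l2_norm (P_perp w n f) * sqrt (1 + (K_const s w n p m \<omega>)\<^sup>2))"
proof -
  obtain y where y: "\<And>j. f j - P_perp w n f j = synthesis w n y j"
    using P_perp_decomposition[OF riesz f] by blast
  show ?thesis
    unfolding is_LS_minimizer_iff[OF f y] using least_squares_error[OF f y] by simp
qed

end

section \<open>Success probability of leverage-score sampling\<close>

context frame_riesz_subspace
begin

lemma leverage_sample_size:
  assumes n: "1 \<le> n" and \<delta>: "0 < \<delta>"
    and m: "B * D / (A * C) * real n * ln (2 * real n / \<delta>) \<le> real m"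
  shows "real n * (1 - A * C / Re (mat_trace (Sigma_mat s w n))) ^ m \<le> \<delta>"
proof (rule one_minus_power_le[OF _ _ _ n \<delta>])
  let ?T = "Re (mat_trace (Sigma_mat s w n))"
  have T: "A * C \<le> ?T" "?T \<le> real n * (B * D)"
    using AC_le_trace[OF n] trace_Sigma_mat_bounds(2) by auto
  then show "0 < A * C / ?T" "A * C / ?T \<le> 1" using AC_pos by auto
  have "ln (2 * real n / \<delta>) = A * C / (real n * (B * D)) * (B * D / (A * C) * real n * ln (2 * real n / \<delta>))"
    using AC_pos BD_pos n by (auto simp: field_simps)
  also have "\<dots> \<le> A * C / (real n * (B * D)) * real m"
    using m AC_pos BD_pos n by (intro mult_left_mono) auto
  also have "\<dots> \<le> A * C / ?T * real m"
    using T AC_pos by (intro mult_right_mono divide_left_mono) auto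
  finally show "ln (2 * real n / \<delta>) \<le> A * C / ?T * real m" .
qed

lemma leverage_determined_least_squares:
  assumes n: "1 \<le> n" and m: "0 < m" and kernel: "kernel_dim (coef s w) n (\<omega> ` {..<m}) = 0"
  shows "determined_least_squares s w C D (leverage s w n) m n \<omega>"
proof -
  interpret row_sampling "coef s w" n "A * C" "Re (mat_trace (Sigma_mat s w n))" "leverage s w n"
    by (rule leverage_row_sampling[OF n])
  have "coef s w j k = 0" if "leverage s w n j = 0" "k < n" for j k
  proof -
    have "(\<Sum>k<n. (cmod (coef s w j k))\<^sup>2) = 0" using that(1) T_pos by (simp add: p_eq)
    then show ?thesis using that(2) sum_nonneg_eq_0_iff[of "{..<n}" "\<lambda>k. (cmod (coef s w j k))\<^sup>2"] by simp
  qed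
  then show ?thesis
    using frame_l2[OF frame] riesz m p_nonneg kernel_dim_eq_0_imp[OF kernel]
    by unfold_locales auto
qed

lemma least_squares_if_kernel_dim_eq_0:
  assumes "1 \<le> n" "0 < m" "kernel_dim (coef s w) n (\<omega> ` {..<m}) = 0" and f: "f \<in> l2"
  shows "invertible_mat (Sigma_hat s w n (leverage s w n) m \<omega>) \<and>
         (\<exists>!x. is_LS_minimizer s w n (leverage s w n) m \<omega> f x) \<and>
         (\<forall>x. is_LS_minimizer s w n (leverage s w n) m \<omega> f x \<longrightarrow>
            l2_norm (\<lambda>j. f j - W_iota w n x j)
              \<le> l2_norm (P_perp w n f) * sqrt (1 + (K_const s w n (leverage s w n) m \<omega>)\<^sup>2))"
proof -
  interpret determined_least_squares s w C D "leverage s w n" m n \<omega>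
    by (rule leverage_determined_least_squares[OF assms(1-3)])
  show ?thesis using Sigma_hat_invertible least_squares_solution[OF f] by blast
qed

lemma prob_least_squares_succeeds:
  assumes n: "1 \<le> n" and f: "f \<in> l2" and \<delta>: "0 < \<delta>" "\<delta> < 1"
    and m: "B * D / (A * C) * real n * ln (2 * real n / \<delta>) \<le> real m"
  shows "1 - \<delta> \<le> measure_pmf.prob (sample_pmf (leverage s w n) m)
           {\<omega>. invertible_mat (Sigma_hat s w n (leverage s w n) m \<omega>) \<and>
                (\<exists>!x. is_LS_minimizer s w n (leverage s w n) m \<omega> f x) \<and>
                (\<forall>x. is_LS_minimizer s w n (leverage s w n) m \<omega> f x \<longrightarrow>
                   l2_norm (\<lambda>j. f j - W_iota w n x j)
                     \<le> l2_norm (P_perp w n f) * sqrt (1 + (K_const s w n (leverage s w n) m \<omega>)\<^sup>2))}"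
    (is "_ \<le> measure_pmf.prob ?M ?event")
proof -
  interpret row_sampling "coef s w" n "A * C" "Re (mat_trace (Sigma_mat s w n))" "leverage s w n"
    by (rule leverage_row_sampling[OF n])
  have "0 < ln (2 * real n / \<delta>)" using n \<delta> by (simp add: less_divide_eq)
  then have "0 < B * D / (A * C) * real n * ln (2 * real n / \<delta>)"
    by (intro mult_pos_pos) (use AC_pos BD_pos n in auto)
  then have m_pos: "0 < m" using m by simp
  have "1 - \<delta> \<le> measure_pmf.prob ?M {\<omega>. kernel_dim (coef s w) n (\<omega> ` {..<m}) = 0}"
    using prob_kernel_dim_eq_0[OF AC_le_trace[OF n], of m] leverage_sample_size[OF n \<delta>(1) m]
    by linarith
  also have "\<dots> \<le> measure_pmf.prob ?M ?event"
    by (rule measure_pmf.finite_measure_mono)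
      (auto dest: least_squares_if_kernel_dim_eq_0[OF n m_pos _ f])
  finally show ?thesis .
qed

end

theorem corollary3p8:
  fixes A B C D :: real
  assumes "0 < A" "A \<le> B" "0 < C" "C \<le> D"
  shows "\<exists>c > 0. \<forall>s w. is_frame s A B \<longrightarrow> is_riesz_basis w C D \<longrightarrow>
           closed_span w \<subseteq> closed_span s \<longrightarrow>
           (\<forall>n \<ge> 1. R_prime s w n (leverage s w n) < \<infinity> \<longrightarrow>
             (\<forall>f \<in> l2. \<forall>\<delta>::real. 0 < \<delta> \<longrightarrow> \<delta> < 1 \<longrightarrow> (\<forall>m::nat.
                real m \<ge> c * real n * ln (2 * real n / \<delta>) \<longrightarrow>
                measure_pmf.prob (sample_pmf (leverage s w n) m)
                  {\<omega>. invertible_mat (Sigma_hat s w n (leverage s w n) m \<omega>) \<and>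
                       (\<exists>!x. is_LS_minimizer s w n (leverage s w n) m \<omega> f x) \<and>
                       (\<forall>x. is_LS_minimizer s w n (leverage s w n) m \<omega> f x \<longrightarrow>
                          l2_norm (\<lambda>j. f j - W_iota w n x j)
                            \<le> l2_norm (P_perp w n f) *
                               sqrt (1 + (K_const s w n (leverage s w n) m \<omega>)\<^sup>2))}
                \<ge> 1 - \<delta>)))"
proof (intro exI[of _ "B * D / (A * C)"] conjI allI impI ballI)
  show "0 < B * D / (A * C)" using assms by simp
qed (auto intro!: frame_riesz_subspace.prob_least_squares_succeeds simp: frame_riesz_subspace_def)

end
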